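(* Let $G$ be a finite connected graph (loops and multiple edges allowed) and $\alpha(G)$ the number of Eulerian equivalence classes of $\mathcal{BO}(G)$. Then: (i) if $G$ has a single vertex and no edges, $\alpha(G)=1$; (ii) if $e$ is a loop, $\alpha(G)=\alpha(G-e)$; (iii) if $e$ is a bridge, $\alpha(G)=0$; (iv) if $e$ is neither a bridge nor a loop, $\alpha(G)=\alpha(G-e)+\alpha(G/e)$.
   Context: An orientation of $G=(V,E)$ assigns a direction to each edge. For a partition $V=S\sqcup T$ with $S,T\neq\emptyset$, $[S,T]$ denotes the set of edges joining $S$ and $T$ (a cut); a bond is a minimal nonempty cut. For an orientation $\varepsilon$, $(S,T)_\varepsilon$ is the set of edges of $[S,T]$ directed from $S$ to $T$. A bond $[S,T]$ is directed if $(S,T)_\varepsilon=\emptyset$ or $(T,S)_\varepsilon=\emptyset$; a cut is directed if it is a disjoint union of directed bonds. $\mathcal{BO}(G)$ is the set of orientations of $G$ with no (nonempty) directed cut (for connected $G$: the totally cyclic orientations). Two orientations $\varepsilon_1,\varepsilon_2$ are Eulerian equivalent if the spanning subgraph formed by the edges $\{e:\varepsilon_1(e)\neq\varepsilon_2(e)\}$, oriented by $\varepsilon_1$, has in-degree equal to out-degree at every vertex. $G-e$ is deletion and $G/e$ contraction of $e$. *)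

theory Defs
  imports Main
begin

text \<open>Each edge e carries a
reference pair ends e = (x, y); an orientation eps assigns True if e is directed
from x to y and False if from y to x. Orientations are extensional
(False outside the edge set) so that they form a finite set.\<close>

record ('v, 'e) mgraph =
  verts :: "'v set"
  edges :: "'e set"
  ends  :: "'e \<Rightarrow> 'v \<times> 'v"

definition wf_graph :: "('v, 'e) mgraph \<Rightarrow> bool" where
  "wf_graph G \<longleftrightarrow> finite (verts G) \<and> finite (edges G) \<and>
     (\<forall>e\<in>edges G. fst (ends G e) \<in> verts G \<and> snd (ends G e) \<in> verts G)"

definition is_loop :: "('v, 'e) mgraph \<Rightarrow> 'e \<Rightarrow> bool" where
  "is_loop G e \<longleftrightarrow> fst (ends G e) = snd (ends G e)"

definition adj :: "('v, 'e) mgraph \<Rightarrow> ('v \<times> 'v) set" where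
  "adj G = {(x, y). \<exists>e\<in>edges G. ends G e = (x, y) \<or> ends G e = (y, x)}"

definition connected_graph :: "('v, 'e) mgraph \<Rightarrow> bool" where
  "connected_graph G \<longleftrightarrow> verts G \<noteq> {} \<and>
     (\<forall>u\<in>verts G. \<forall>v\<in>verts G. (u, v) \<in> (adj G)\<^sup>*)"

definition delete_edge :: "('v, 'e) mgraph \<Rightarrow> 'e \<Rightarrow> ('v, 'e) mgraph" where
  "delete_edge G e = G\<lparr>edges := edges G - {e}\<rparr>"

definition contract_edge :: "('v, 'e) mgraph \<Rightarrow> 'e \<Rightarrow> ('v, 'e) mgraph" where
  "contract_edge G e =
     (let u = fst (ends G e); v = snd (ends G e);
          f = (\<lambda>x. if x = v then u else x)
      in \<lparr>verts = f ` verts G, edges = edges G - {e},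
          ends = (\<lambda>d. (f (fst (ends G d)), f (snd (ends G d))))\<rparr>)"

definition is_bridge :: "('v, 'e) mgraph \<Rightarrow> 'e \<Rightarrow> bool" where
  "is_bridge G e \<longleftrightarrow> e \<in> edges G \<and>
     (\<exists>u\<in>verts G. \<exists>v\<in>verts G. (u, v) \<in> (adj G)\<^sup>* \<and> (u, v) \<notin> (adj (delete_edge G e))\<^sup>*)"

definition orientations :: "('v, 'e) mgraph \<Rightarrow> ('e \<Rightarrow> bool) set" where
  "orientations G = {eps. \<forall>e. e \<notin> edges G \<longrightarrow> \<not> eps e}"

definition otail :: "('v, 'e) mgraph \<Rightarrow> ('e \<Rightarrow> bool) \<Rightarrow> 'e \<Rightarrow> 'v" where
  "otail G eps e = (if eps e then fst (ends G e) else snd (ends G e))"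

definition ohead :: "('v, 'e) mgraph \<Rightarrow> ('e \<Rightarrow> bool) \<Rightarrow> 'e \<Rightarrow> 'v" where
  "ohead G eps e = (if eps e then snd (ends G e) else fst (ends G e))"

definition vpartition :: "('v, 'e) mgraph \<Rightarrow> 'v set \<Rightarrow> 'v set \<Rightarrow> bool" where
  "vpartition G S T \<longleftrightarrow> S \<union> T = verts G \<and> S \<inter> T = {} \<and> S \<noteq> {} \<and> T \<noteq> {}"

definition cut_edges :: "('v, 'e) mgraph \<Rightarrow> 'v set \<Rightarrow> 'v set \<Rightarrow> 'e set" where
  "cut_edges G S T = {e\<in>edges G.
     (fst (ends G e) \<in> S \<and> snd (ends G e) \<in> T) \<or> (fst (ends G e) \<in> T \<and> snd (ends G e) \<in> S)}"

definition dir_edges :: "('v, 'e) mgraph \<Rightarrow> ('e \<Rightarrow> bool) \<Rightarrow> 'v set \<Rightarrow> 'v set \<Rightarrow> 'e set" where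
  "dir_edges G eps S T = {e\<in>cut_edges G S T. otail G eps e \<in> S \<and> ohead G eps e \<in> T}"

definition is_cut :: "('v, 'e) mgraph \<Rightarrow> 'e set \<Rightarrow> bool" where
  "is_cut G C \<longleftrightarrow> (\<exists>S T. vpartition G S T \<and> C = cut_edges G S T)"

definition is_bond :: "('v, 'e) mgraph \<Rightarrow> 'e set \<Rightarrow> bool" where
  "is_bond G B \<longleftrightarrow> is_cut G B \<and> B \<noteq> {} \<and>
     (\<forall>C. is_cut G C \<and> C \<noteq> {} \<and> C \<subseteq> B \<longrightarrow> C = B)"

definition directed_bond :: "('v, 'e) mgraph \<Rightarrow> ('e \<Rightarrow> bool) \<Rightarrow> 'e set \<Rightarrow> bool" where
  "directed_bond G eps B \<longleftrightarrow> is_bond G B \<and>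
     (\<exists>S T. vpartition G S T \<and> B = cut_edges G S T \<and>
        (dir_edges G eps S T = {} \<or> dir_edges G eps T S = {}))"

definition directed_cut :: "('v, 'e) mgraph \<Rightarrow> ('e \<Rightarrow> bool) \<Rightarrow> 'e set \<Rightarrow> bool" where
  "directed_cut G eps C \<longleftrightarrow> is_cut G C \<and>
     (\<exists>\<B>. (\<forall>B\<in>\<B>. directed_bond G eps B) \<and> pairwise disjnt \<B> \<and> \<Union>\<B> = C)"

definition BO :: "('v, 'e) mgraph \<Rightarrow> ('e \<Rightarrow> bool) set" where
  "BO G = {eps \<in> orientations G. \<not> (\<exists>C. C \<noteq> {} \<and> directed_cut G eps C)}"

text \<open>Eulerian equivalence: the edges where eps1, eps2 differ, oriented by eps1,
have in-degree = out-degree at every vertex (a loop contributes one to each).\<close>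
definition euler_equiv :: "('v, 'e) mgraph \<Rightarrow> ('e \<Rightarrow> bool) \<Rightarrow> ('e \<Rightarrow> bool) \<Rightarrow> bool" where
  "euler_equiv G eps1 eps2 \<longleftrightarrow> (\<forall>v\<in>verts G.
     card {e\<in>edges G. eps1 e \<noteq> eps2 e \<and> ohead G eps1 e = v} =
     card {e\<in>edges G. eps1 e \<noteq> eps2 e \<and> otail G eps1 e = v})"

definition alpha :: "('v, 'e) mgraph \<Rightarrow> nat" where
  "alpha G = card (BO G // {(a, b). a \<in> BO G \<and> b \<in> BO G \<and> euler_equiv G a b})"

end

theory Submission
  imports Defs
begin

(* Section 1: two orientations are Eulerian equivalent iff they have the same
   in-degree vector, so alpha(G) counts the in-degree vectors realised by BO(G).
   Section 2: a one-way cut of minimal size is a bond; hence BO(G) consists of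
   the totally cyclic orientations (every nonempty cut crossed both ways).  A single vertex has only the empty orientation,
   a loop lies in no cut and only shifts an in-degree, a bridge forms a cut {e}.
   Section 4 (any graph): reachability is witnessed by cuts, reversing a simple
   directed a-b path moves one unit of in-degree from b to a and keeps cuts not
   separating a, b crossed, and a surplus of in-degree at a (all other in-degrees
   equal except at b) forces a directed path from a to b.
   Sections 5-6, for e = uv neither a loop nor a bridge, H = G - e, K = G / e:
   let O be the orientations of H whose cuts not separating u, v are crossed both
   ways.  Then BO(K) = O, BO(H) is the part of O with directed paths u-v and v-u,
   and BO(G) is O with e added so as to close a cycle.  Comparing in-degree
   vectors with the results of Section 4 gives alpha(G) = alpha(H) + alpha(K). *)

section \<open>In-degree vectors and Eulerian equivalence\<close>

definition in_degree :: "('v, 'e) mgraph \<Rightarrow> ('e \<Rightarrow> bool) \<Rightarrow> 'v \<Rightarrow> nat" where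
  "in_degree G eps x = (if x \<in> verts G then card {d\<in>edges G. ohead G eps d = x} else 0)"

lemma card_filter_split:
  assumes "finite A"
  shows "card {d\<in>A. P d} = card {d\<in>A. Q d \<and> P d} + card {d\<in>A. \<not> Q d \<and> P d}"
proof -
  have "{d\<in>A. P d} = {d\<in>A. Q d \<and> P d} \<union> {d\<in>A. \<not> Q d \<and> P d}" by auto
  moreover have "{d\<in>A. Q d \<and> P d} \<inter> {d\<in>A. \<not> Q d \<and> P d} = {}" by auto
  ultimately show ?thesis using assms by (simp add: card_Un_disjoint)
qed

text \<open>Reversing the edges where two orientations differ moves, at every vertex,
  the in-coming reversed edges to the out-going ones and conversely.\<close>
lemma in_degree_exchange:
  assumes "finite (edges G)" "x \<in> verts G"
  shows "in_degree G eps' x + card {d\<in>edges G. eps d \<noteq> eps' d \<and> ohead G eps d = x} =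
         in_degree G eps x + card {d\<in>edges G. eps d \<noteq> eps' d \<and> otail G eps d = x}"
proof -
  have "{d\<in>edges G. eps d = eps' d \<and> ohead G eps' d = x} = {d\<in>edges G. eps d = eps' d \<and> ohead G eps d = x}"
    by (auto simp: ohead_def)
  moreover have "{d\<in>edges G. \<not> eps d = eps' d \<and> ohead G eps' d = x} =
      {d\<in>edges G. eps d \<noteq> eps' d \<and> otail G eps d = x}"
    by (auto simp: ohead_def otail_def)
  ultimately show ?thesis
    using assms card_filter_split[OF assms(1), of "\<lambda>d. ohead G eps' d = x" "\<lambda>d. eps d = eps' d"]
      card_filter_split[OF assms(1), of "\<lambda>d. ohead G eps d = x" "\<lambda>d. eps d = eps' d"]
    by (simp add: in_degree_def)
qed

lemma euler_equiv_iff_in_degree: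
  assumes "finite (edges G)"
  shows "euler_equiv G eps eps' \<longleftrightarrow> in_degree G eps = in_degree G eps'"
proof -
  have "in_degree G eps x = in_degree G eps' x \<longleftrightarrow>
      card {d\<in>edges G. eps d \<noteq> eps' d \<and> ohead G eps d = x} =
      card {d\<in>edges G. eps d \<noteq> eps' d \<and> otail G eps d = x}" if "x \<in> verts G" for x
    using in_degree_exchange[OF assms that, of eps' eps] by linarith
  then show ?thesis
    unfolding euler_equiv_def fun_eq_iff by (auto simp: in_degree_def)
qed

lemma card_quotient_kernel:
  "card (A // {(a, b). a \<in> A \<and> b \<in> A \<and> f a = f b}) = card (f ` A)"
proof -
  let ?r = "{(a, b). a \<in> A \<and> b \<in> A \<and> f a = f b}"
  let ?fibre = "\<lambda>y. {a\<in>A. f a = y}"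
  have "A // ?r = (\<lambda>x. ?r``{x}) ` A" unfolding quotient_def by auto
  also have "\<dots> = (\<lambda>x. ?fibre (f x)) ` A" by (rule image_cong) auto
  also have "\<dots> = ?fibre ` (f ` A)" by (simp add: image_image)
  finally have "A // ?r = ?fibre ` (f ` A)" .
  moreover have "inj_on ?fibre (f ` A)" by (rule inj_onI) blast
  ultimately show ?thesis by (simp add: card_image)
qed

lemma alpha_eq_card_in_degrees:
  assumes "finite (edges G)"
  shows "alpha G = card (in_degree G ` BO G)"
proof -
  have "{(a, b). a \<in> BO G \<and> b \<in> BO G \<and> euler_equiv G a b} =
        {(a, b). a \<in> BO G \<and> b \<in> BO G \<and> in_degree G a = in_degree G b}"
    using euler_equiv_iff_in_degree[OF assms] by auto
  then show ?thesis unfolding alpha_def by (simp only: card_quotient_kernel)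
qed

text \<open>Orientations are determined by the set of edges they orient forwards.\<close>
lemma finite_orientations: "finite (edges G) \<Longrightarrow> finite (orientations G)"
proof -
  assume fin: "finite (edges G)"
  have "orientations G \<subseteq> (\<lambda>S x. x \<in> S) ` Pow (edges G)"
  proof
    fix eps assume "eps \<in> orientations G"
    then have "{x. eps x} \<in> Pow (edges G)" by (auto simp: orientations_def)
    then show "eps \<in> (\<lambda>S x. x \<in> S) ` Pow (edges G)" by (rule rev_image_eqI) simp
  qed
  moreover have "finite ((\<lambda>S x. x \<in> S) ` Pow (edges G))" using fin by simp
  ultimately show ?thesis by (rule finite_subset)
qed


section \<open>Orientations without directed cuts are the totally cyclic ones\<close>

definition totally_cyclic :: "('v, 'e) mgraph \<Rightarrow> ('e \<Rightarrow> bool) \<Rightarrow> bool" where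
  "totally_cyclic G eps \<longleftrightarrow> (\<forall>S T. vpartition G S T \<longrightarrow> cut_edges G S T \<noteq> {} \<longrightarrow>
      dir_edges G eps S T \<noteq> {} \<and> dir_edges G eps T S \<noteq> {})"

lemma cut_edges_oriented: "d \<in> cut_edges G S T \<longleftrightarrow> d \<in> edges G \<and>
   ((otail G eps d \<in> S \<and> ohead G eps d \<in> T) \<or> (otail G eps d \<in> T \<and> ohead G eps d \<in> S))"
  by (auto simp: cut_edges_def otail_def ohead_def)

lemma dir_edges_iff:
  "d \<in> dir_edges G eps S T \<longleftrightarrow> d \<in> edges G \<and> otail G eps d \<in> S \<and> ohead G eps d \<in> T"
  by (auto simp: dir_edges_def cut_edges_def otail_def ohead_def)

lemma cut_edges_sym: "cut_edges G S T = cut_edges G T S"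
  by (auto simp: cut_edges_def)

lemma vpartition_sym: "vpartition G S T \<longleftrightarrow> vpartition G T S"
  by (auto simp: vpartition_def)

lemma vpartition_swap: "vpartition G S T \<Longrightarrow> vpartition G T S"
  by (simp add: vpartition_sym)

lemma one_way_cut_edge:
  assumes "dir_edges G eps T S = {}" "d \<in> cut_edges G S T"
  shows "otail G eps d \<in> S \<and> ohead G eps d \<in> T"
proof -
  have "d \<notin> dir_edges G eps T S" using assms(1) by simp
  then show ?thesis using assms(2) unfolding cut_edges_oriented[of _ _ _ _ eps] dir_edges_iff by blast
qed

text \<open>If the cut [S',T'] lies in the cut [S,T], then the cut around S \<inter> S'
  also lies in [S,T]: an edge leaving S \<inter> S' either leaves S or leaves S'.\<close>
lemma cut_of_side_intersection:
  assumes "vpartition G S T" "vpartition G S' T'" "cut_edges G S' T' \<subseteq> cut_edges G S T"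
  shows "cut_edges G (S \<inter> S') (verts G - S \<inter> S') \<subseteq> cut_edges G S T"
proof
  fix d assume d: "d \<in> cut_edges G (S \<inter> S') (verts G - S \<inter> S')"
  have leaving: "(p \<in> S \<and> q \<in> T) \<or> (p \<in> S' \<and> q \<in> T')"
    if "p \<in> S \<inter> S'" "q \<in> verts G - S \<inter> S'" for p q
    using that assms(1,2) unfolding vpartition_def by blast
  have "d \<in> cut_edges G S T \<or> d \<in> cut_edges G S' T'"
    using d leaving[of "fst (ends G d)" "snd (ends G d)"] leaving[of "snd (ends G d)" "fst (ends G d)"]
    unfolding cut_edges_def by auto
  then show "d \<in> cut_edges G S T" using assms(3) by blast
qed

lemma dir_edges_into_side:
  assumes "S \<inter> T = {}" "cut_edges G X Y \<subseteq> cut_edges G S T" "X \<subseteq> S \<or> Y \<subseteq> T"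
  shows "dir_edges G eps Y X \<subseteq> dir_edges G eps T S"
proof
  fix d assume d: "d \<in> dir_edges G eps Y X"
  then have "d \<in> cut_edges G S T"
    using assms(2) by (auto simp: dir_edges_iff cut_edges_oriented[of _ _ _ _ eps])
  then show "d \<in> dir_edges G eps T S"
    using d assms(1,3) by (auto simp: dir_edges_iff cut_edges_oriented[of _ _ _ _ eps])
qed

text \<open>The heart of "a minimal one-way cut is a bond": if such a cut B = [S,T]
  contained a nonempty cut [S2,T2] and had an edge x inside S2, then the cuts
  around S \<inter> S2 and around T \<inter> S2 would be one-way subcuts of B containing x,
  hence equal to B by minimality, and every edge of [S2,T2] would have both ends
  in S2.\<close>
lemma minimal_one_way_cut_no_inner_edge:
  assumes part: "vpartition G S T" and one_way: "dir_edges G eps T S = {}"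
    and minimal: "\<And>S' T'. vpartition G S' T' \<Longrightarrow> cut_edges G S' T' \<noteq> {} \<Longrightarrow>
        dir_edges G eps T' S' = {} \<Longrightarrow> cut_edges G S' T' \<subseteq> cut_edges G S T \<Longrightarrow>
        cut_edges G S' T' = cut_edges G S T"
    and sub: "vpartition G S2 T2" "cut_edges G S2 T2 \<subseteq> cut_edges G S T" "cut_edges G S2 T2 \<noteq> {}"
    and x: "x \<in> cut_edges G S T" "otail G eps x \<in> S2" "ohead G eps x \<in> S2"
  shows False
proof -
  let ?V = "verts G" and ?B = "cut_edges G S T"
  define A where "A = S \<inter> S2"
  define A' where "A' = T \<inter> S2"
  have disj: "S \<inter> T = {}" "S2 \<inter> T2 = {}" and sides: "S \<subseteq> ?V" "T \<subseteq> ?V"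
    using part sub(1) by (auto simp: vpartition_def)
  have x_edge: "x \<in> edges G" using x(1) by (simp add: cut_edges_def)
  have xA: "otail G eps x \<in> A" "ohead G eps x \<in> A'"
    using one_way_cut_edge[OF one_way x(1)] x by (auto simp: A_def A'_def)
  have x_out: "ohead G eps x \<in> ?V - A" "otail G eps x \<in> ?V - A'"
    using xA sides disj by (auto simp: A_def A'_def)
  have "x \<in> cut_edges G A (?V - A)"
    using x_edge xA x_out unfolding cut_edges_oriented[of x G _ _ eps] by blast
  moreover have "vpartition G A (?V - A)"
    using xA sides disj by (auto simp: vpartition_def A_def A'_def)
  moreover have subA: "cut_edges G A (?V - A) \<subseteq> ?B"
    unfolding A_def by (rule cut_of_side_intersection[OF part sub(1,2)])
  moreover have "dir_edges G eps (?V - A) A = {}"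
    using dir_edges_into_side[OF disj(1) subA, of eps] one_way by (auto simp: A_def)
  ultimately have cutA: "cut_edges G A (?V - A) = ?B" using minimal by blast
  have subT: "cut_edges G S2 T2 \<subseteq> cut_edges G T S" using sub(2) cut_edges_sym by metis
  have "x \<in> cut_edges G (?V - A') A'"
    using x_edge xA x_out unfolding cut_edges_oriented[of x G _ _ eps] by blast
  moreover have "vpartition G (?V - A') A'"
    using xA sides disj by (auto simp: vpartition_def A_def A'_def)
  moreover have subA': "cut_edges G (?V - A') A' \<subseteq> ?B"
  proof -
    have "cut_edges G A' (?V - A') \<subseteq> cut_edges G T S"
      unfolding A'_def by (rule cut_of_side_intersection[OF iffD1[OF vpartition_sym part] sub(1) subT])
    then show ?thesis by (simp only: cut_edges_sym[of G A'] cut_edges_sym[of G T])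
  qed
  moreover have "dir_edges G eps A' (?V - A') = {}"
    using dir_edges_into_side[OF disj(1) subA', of eps] one_way by (auto simp: A'_def)
  ultimately have cutA': "cut_edges G (?V - A') A' = ?B" using minimal by blast
  obtain y where yC: "y \<in> cut_edges G S2 T2" using sub(3) by blast
  then have yB: "y \<in> ?B" using sub(2) by blast
  note y_dir = one_way_cut_edge[OF one_way yB]
  have "otail G eps y \<in> A \<or> ohead G eps y \<in> A"
    using yB unfolding cutA[symmetric] cut_edges_oriented[of y G _ _ eps] by blast
  moreover have "ohead G eps y \<notin> A" using y_dir disj by (auto simp: A_def)
  moreover have "otail G eps y \<in> A' \<or> ohead G eps y \<in> A'"
    using yB unfolding cutA'[symmetric] cut_edges_oriented[of y G _ _ eps] by blast
  moreover have "otail G eps y \<notin> A'" using y_dir disj by (auto simp: A'_def)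
  ultimately have "otail G eps y \<in> S2" "ohead G eps y \<in> S2" by (auto simp: A_def A'_def)
  then show False
    using yC disj(2) unfolding cut_edges_oriented[of y G _ _ eps] by blast
qed

lemma minimal_one_way_cut_is_bond:
  assumes part: "vpartition G S T" and one_way: "dir_edges G eps T S = {}"
    and nonempty: "cut_edges G S T \<noteq> {}"
    and minimal: "\<And>S' T'. vpartition G S' T' \<Longrightarrow> cut_edges G S' T' \<noteq> {} \<Longrightarrow>
        dir_edges G eps T' S' = {} \<Longrightarrow> cut_edges G S' T' \<subseteq> cut_edges G S T \<Longrightarrow>
        cut_edges G S' T' = cut_edges G S T"
  shows "is_bond G (cut_edges G S T)"
  unfolding is_bond_def
proof (intro conjI allI impI)
  show "is_cut G (cut_edges G S T)" using part by (auto simp: is_cut_def)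
  show "cut_edges G S T \<noteq> {}" by (rule nonempty)
  fix C assume C: "is_cut G C \<and> C \<noteq> {} \<and> C \<subseteq> cut_edges G S T"
  then obtain S2 T2 where S2: "vpartition G S2 T2" "C = cut_edges G S2 T2"
    by (auto simp: is_cut_def)
  show "C = cut_edges G S T"
  proof (rule ccontr)
    assume "C \<noteq> cut_edges G S T"
    then obtain x where x: "x \<in> cut_edges G S T" "x \<notin> C" using C by blast
    have "otail G eps x \<in> S2 \<union> T2" "ohead G eps x \<in> S2 \<union> T2"
      using one_way_cut_edge[OF one_way x(1)] part S2(1) by (auto simp: vpartition_def)
    moreover have "x \<in> edges G" "x \<notin> cut_edges G S2 T2" using x S2 by (auto simp: cut_edges_def)
    ultimately have "(otail G eps x \<in> S2 \<and> ohead G eps x \<in> S2) \<or> (otail G eps x \<in> T2 \<and> ohead G eps x \<in> T2)"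
      unfolding cut_edges_oriented[of x G S2 T2 eps] by blast
    then show False
    proof
      assume inner: "otail G eps x \<in> S2 \<and> ohead G eps x \<in> S2"
      show False
        by (rule minimal_one_way_cut_no_inner_edge[OF part one_way minimal S2(1) _ _ x(1)])
          (use C S2 inner in auto)
    next
      assume inner: "otail G eps x \<in> T2 \<and> ohead G eps x \<in> T2"
      have swapped: "vpartition G T2 S2" using S2(1) vpartition_sym by blast
      show False
        by (rule minimal_one_way_cut_no_inner_edge[OF part one_way minimal swapped _ _ x(1)])
          (use C S2 inner cut_edges_sym[of G T2 S2] in auto)
    qed
  qed
qed

text \<open>Every nonempty cut crossed in one direction only contains a directed
  bond: take such a cut with the fewest edges.\<close>
lemma one_way_cut_contains_directed_bond:
  assumes fin: "finite (edges G)"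
    and cut: "vpartition G S T" "cut_edges G S T \<noteq> {}" "dir_edges G eps T S = {}"
  shows "\<exists>B. directed_bond G eps B \<and> B \<noteq> {}"
proof -
  let ?one_way = "\<lambda>p. vpartition G (fst p) (snd p) \<and> cut_edges G (fst p) (snd p) \<noteq> {} \<and>
              dir_edges G eps (snd p) (fst p) = {}"
  let ?size = "\<lambda>p. card (cut_edges G (fst p) (snd p))"
  have "?one_way (S, T)" using cut by simp
  from ex_has_least_nat[of ?one_way "(S, T)" ?size, OF this]
  obtain p where p: "?one_way p" and least: "\<And>q. ?one_way q \<Longrightarrow> ?size p \<le> ?size q" by blast
  obtain S0 T0 where p_eq: "p = (S0, T0)" by (cases p)
  let ?B = "cut_edges G S0 T0"
  have B: "vpartition G S0 T0" "?B \<noteq> {}" "dir_edges G eps T0 S0 = {}" using p p_eq by auto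
  have finB: "finite ?B" using fin by (rule rev_finite_subset) (auto simp: cut_edges_def)
  have minimal: "cut_edges G S' T' = ?B" if "vpartition G S' T'" "cut_edges G S' T' \<noteq> {}"
      "dir_edges G eps T' S' = {}" "cut_edges G S' T' \<subseteq> ?B" for S' T'
  proof (rule card_subset_eq[OF finB that(4)])
    show "card (cut_edges G S' T') = card ?B"
      using least[of "(S', T')"] that card_mono[OF finB that(4)] p_eq by simp
  qed
  have "directed_bond G eps ?B"
    unfolding directed_bond_def
    using minimal_one_way_cut_is_bond[OF B(1,3,2) minimal] B by blast
  then show ?thesis using B(2) by blast
qed

text \<open>A directed bond is a cut crossed in one direction only.\<close>
lemma totally_cyclic_no_directed_cut:
  assumes tc: "totally_cyclic G eps" and nonempty: "C \<noteq> {}"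
  shows "\<not> directed_cut G eps C"
proof
  assume "directed_cut G eps C"
  then obtain \<B> where \<B>: "\<forall>B\<in>\<B>. directed_bond G eps B" "\<Union>\<B> = C"
    by (auto simp: directed_cut_def)
  obtain B where B: "B \<in> \<B>" "B \<noteq> {}" using \<B>(2) nonempty by blast
  then obtain S T where "vpartition G S T" "B = cut_edges G S T"
    "dir_edges G eps S T = {} \<or> dir_edges G eps T S = {}"
    using \<B>(1) unfolding directed_bond_def by blast
  then show False using tc B(2) unfolding totally_cyclic_def by blast
qed

text \<open>Conversely, a nonempty one-way cut contains a directed bond, which alone
  is a directed cut.\<close>
lemma no_directed_cut_totally_cyclic:
  assumes fin: "finite (edges G)" and BO: "eps \<in> BO G"
  shows "totally_cyclic G eps"
proof -
  have no_bond: False if "directed_bond G eps B" "B \<noteq> {}" for B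
  proof -
    have "directed_cut G eps B"
      unfolding directed_cut_def using that(1)
      by (intro conjI exI[of _ "{B}"]) (auto simp: directed_bond_def is_bond_def)
    then show False using BO that(2) by (auto simp: BO_def)
  qed
  show ?thesis unfolding totally_cyclic_def
  proof (intro allI impI conjI notI)
    fix S T assume cut: "vpartition G S T" "cut_edges G S T \<noteq> {}"
    show False if "dir_edges G eps S T = {}"
    proof -
      have "vpartition G T S" "cut_edges G T S \<noteq> {}"
        using cut vpartition_swap cut_edges_sym by metis+
      then show False using one_way_cut_contains_directed_bond[OF fin _ _ that] no_bond by blast
    qed
    show False if "dir_edges G eps T S = {}"
      using one_way_cut_contains_directed_bond[OF fin cut that] no_bond by blast
  qed
qed

theorem BO_eq_totally_cyclic:
  assumes "finite (edges G)"
  shows "BO G = {eps \<in> orientations G. totally_cyclic G eps}"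
  using totally_cyclic_no_directed_cut no_directed_cut_totally_cyclic[OF assms]
  by (auto simp: BO_def)


section \<open>The base case, loops and bridges\<close>

text \<open>Part (i): a single vertex has no partition, so its only orientation is
  totally cyclic.\<close>
lemma alpha_single_vertex:
  assumes "verts G = {w}" "edges G = {}"
  shows "alpha G = 1"
proof -
  have no_partition: "\<not> vpartition G S T" for S T
  proof
    assume "vpartition G S T"
    then have sides: "S \<union> T = {w}" "S \<inter> T = {}" "S \<noteq> {}" "T \<noteq> {}"
      using assms(1) by (auto simp: vpartition_def)
    then obtain s t where "s \<in> S" "t \<in> T" by blast
    then have "s = w" "t = w" using sides(1) by blast+
    then show False using sides(2) \<open>s \<in> S\<close> \<open>t \<in> T\<close> by blast
  qed
  have orient: "orientations G = {\<lambda>_. False}" using assms(2) by (auto simp: orientations_def)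
  have "totally_cyclic G (\<lambda>_. False)" unfolding totally_cyclic_def using no_partition by blast
  then have "BO G = {\<lambda>_. False}"
    using BO_eq_totally_cyclic[of G] assms(2) unfolding orient by auto
  then show ?thesis using alpha_eq_card_in_degrees[of G] assms(2) by simp
qed

lemma rtrancl_leaves_set:
  "(x, y) \<in> R\<^sup>* \<Longrightarrow> x \<in> S \<Longrightarrow> y \<notin> S \<Longrightarrow> \<exists>a b. (a, b) \<in> R \<and> a \<in> S \<and> b \<notin> S"
  by (induction rule: rtrancl_induct) auto

lemma delete_edge_simps [simp]:
  "verts (delete_edge G e) = verts G" "edges (delete_edge G e) = edges G - {e}"
  "ends (delete_edge G e) = ends G"
  "ohead (delete_edge G e) = ohead G" "otail (delete_edge G e) = otail G"
  by (auto simp: delete_edge_def ohead_def otail_def fun_eq_iff)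

text \<open>If two vertices are connected in G but not in G - e, then some cut of G
  consists of e alone (the side of the first vertex in G - e).\<close>
lemma bridge_cut:
  assumes wf: "wf_graph G" and bridge: "is_bridge G e"
  obtains S T where "vpartition G S T" "cut_edges G S T = {e}"
proof -
  let ?H = "delete_edge G e"
  obtain x y where xy: "x \<in> verts G" "y \<in> verts G" "(x, y) \<in> (adj G)\<^sup>*" "(x, y) \<notin> (adj ?H)\<^sup>*"
    using bridge by (auto simp: is_bridge_def)
  define S where "S = {z\<in>verts G. (x, z) \<in> (adj ?H)\<^sup>*}"
  define T where "T = verts G - S"
  have part: "vpartition G S T" using xy unfolding vpartition_def S_def T_def by auto
  have "cut_edges G S T \<subseteq> {e}"
  proof
    fix d assume d: "d \<in> cut_edges G S T"
    show "d \<in> {e}"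
    proof (rule ccontr)
      assume "d \<notin> {e}"
      then have "(fst (ends G d), snd (ends G d)) \<in> adj ?H" "(snd (ends G d), fst (ends G d)) \<in> adj ?H"
        using d by (auto simp: adj_def cut_edges_def)
      then show False
        using d unfolding S_def T_def cut_edges_def by (auto intro: rtrancl_into_rtrancl)
    qed
  qed
  moreover have "cut_edges G S T \<noteq> {}"
  proof -
    have "x \<in> S" "y \<notin> S" using xy by (auto simp: S_def)
    from rtrancl_leaves_set[OF xy(3) this]
    obtain a b where ab: "(a, b) \<in> adj G" "a \<in> S" "b \<notin> S" by blast
    then obtain d where d: "d \<in> edges G" "ends G d = (a, b) \<or> ends G d = (b, a)"
      by (auto simp: adj_def)
    then have "b \<in> T" using wf ab by (auto simp: wf_graph_def T_def)
    then have "d \<in> cut_edges G S T" using d ab by (auto simp: cut_edges_def)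
    then show ?thesis by blast
  qed
  ultimately show ?thesis using that part by blast
qed

text \<open>Part (iii): the cut {e} of a bridge cannot be crossed both ways.\<close>
lemma alpha_bridge:
  assumes wf: "wf_graph G" and bridge: "is_bridge G e"
  shows "alpha G = 0"
proof -
  obtain S T where part: "vpartition G S T" and cut: "cut_edges G S T = {e}"
    using bridge_cut[OF wf bridge] by blast
  have "\<not> totally_cyclic G eps" for eps
  proof
    assume "totally_cyclic G eps"
    then have "dir_edges G eps S T \<noteq> {}" "dir_edges G eps T S \<noteq> {}"
      using part cut unfolding totally_cyclic_def by auto
    moreover have "dir_edges G eps S T \<subseteq> {e}" "dir_edges G eps T S \<subseteq> {e}"
      using cut cut_edges_sym[of G S T] by (auto simp: dir_edges_def)
    ultimately have "e \<in> dir_edges G eps S T" "e \<in> dir_edges G eps T S" by blast+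
    then show False using part by (auto simp: dir_edges_iff vpartition_def)
  qed
  then have "BO G = {}" using BO_eq_totally_cyclic wf by (auto simp: wf_graph_def)
  then show ?thesis using alpha_eq_card_in_degrees[of G] wf by (simp add: wf_graph_def)
qed

lemma ohead_fun_upd_other: "d \<noteq> e \<Longrightarrow> ohead G (eps(e := b)) d = ohead G eps d"
  and otail_fun_upd_other: "d \<noteq> e \<Longrightarrow> otail G (eps(e := b)) d = otail G eps d"
  by (auto simp: ohead_def otail_def)

definition bump :: "'v \<Rightarrow> ('v \<Rightarrow> nat) \<Rightarrow> 'v \<Rightarrow> nat" where
  "bump w \<delta> = \<delta>(w := \<delta> w + 1)"

lemma inj_bump: "inj (bump w)"
proof (rule injI)
  fix \<delta> \<delta>' assume eq: "bump w \<delta> = bump w \<delta>'"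
  show "\<delta> = \<delta>'"
  proof
    fix z show "\<delta> z = \<delta>' z" using fun_cong[OF eq, of z] by (cases "z = w") (simp_all add: bump_def)
  qed
qed

lemma card_bump_image: "card (bump w ` A) = card A"
  using card_image[OF inj_on_subset[OF inj_bump subset_UNIV]] .

lemma in_degree_delete_edge:
  assumes "finite (edges G)" "e \<in> edges G" "ohead G eps e \<in> verts G"
  shows "in_degree G eps = bump (ohead G eps e) (in_degree (delete_edge G e) (eps(e := False)))"
proof
  fix x
  have heads: "{d\<in>edges G. ohead G eps d = x} =
      {d\<in>edges G - {e}. ohead G (eps(e := False)) d = x} \<union> (if ohead G eps e = x then {e} else {})"
    using assms(2) by (auto simp: ohead_fun_upd_other) (metis ohead_fun_upd_other)
  have "card {d\<in>edges G. ohead G eps d = x} =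
      card {d\<in>edges G - {e}. ohead G (eps(e := False)) d = x} + (if ohead G eps e = x then 1 else 0)"
    unfolding heads using assms(1) by (auto simp: card_insert_if)
  then show "in_degree G eps x = bump (ohead G eps e) (in_degree (delete_edge G e) (eps(e := False))) x"
    using assms(3) by (auto simp: in_degree_def bump_def)
qed

text \<open>A loop lies in no cut, so deleting it does not affect total cyclicity.\<close>
lemma totally_cyclic_delete_loop:
  assumes "is_loop G e"
  shows "totally_cyclic (delete_edge G e) (eps(e := b)) \<longleftrightarrow> totally_cyclic G eps"
proof -
  have same_cuts: "cut_edges (delete_edge G e) S T = cut_edges G S T \<and>
      dir_edges (delete_edge G e) (eps(e := b)) S T = dir_edges G eps S T" if "vpartition G S T" for S T
  proof -
    have no_e: "e \<notin> cut_edges G S T"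
      using that assms by (auto simp: cut_edges_def vpartition_def is_loop_def)
    then have cut_eq: "cut_edges (delete_edge G e) S T = cut_edges G S T"
      by (auto simp: cut_edges_def)
    moreover have "dir_edges (delete_edge G e) (eps(e := b)) S T = dir_edges G eps S T"
      unfolding dir_edges_def cut_eq
    proof (rule Collect_cong)
      fix d show "(d \<in> cut_edges G S T \<and> otail (delete_edge G e) (eps(e := b)) d \<in> S \<and>
          ohead (delete_edge G e) (eps(e := b)) d \<in> T) \<longleftrightarrow>
          (d \<in> cut_edges G S T \<and> otail G eps d \<in> S \<and> ohead G eps d \<in> T)"
        using no_e by (cases "d = e") (auto simp: otail_fun_upd_other ohead_fun_upd_other)
    qed
    ultimately show ?thesis by blast
  qed
  have swapped: "dir_edges (delete_edge G e) (eps(e := b)) T S = dir_edges G eps T S"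
    if "vpartition G S T" for S T
    using same_cuts[of T S] vpartition_sym[of G S T] that by blast
  have "vpartition (delete_edge G e) S T \<longleftrightarrow> vpartition G S T" for S T
    by (simp add: vpartition_def)
  then show ?thesis
    unfolding totally_cyclic_def using same_cuts swapped by simp
qed

lemma BO_delete_loop:
  assumes wf: "wf_graph G" and loop: "is_loop G e"
  shows "(\<lambda>eps. eps(e := False)) ` BO G = BO (delete_edge G e)"
proof
  let ?H = "delete_edge G e" and ?drop = "\<lambda>eps::'b \<Rightarrow> bool. eps(e := False)"
  have fin: "finite (edges G)" "finite (edges ?H)" using wf by (auto simp: wf_graph_def)
  note BO_G = BO_eq_totally_cyclic[OF fin(1)] and BO_H = BO_eq_totally_cyclic[OF fin(2)]
  show "?drop ` BO G \<subseteq> BO ?H"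
  proof (rule image_subsetI)
    fix eps assume "eps \<in> BO G"
    then have orient: "eps \<in> orientations G" and cyclic: "totally_cyclic G eps"
      unfolding BO_G by auto
    have "totally_cyclic ?H (?drop eps)"
      using totally_cyclic_delete_loop[OF loop, of eps False] cyclic by blast
    moreover have "?drop eps \<in> orientations ?H" using orient by (auto simp: orientations_def)
    ultimately show "?drop eps \<in> BO ?H" unfolding BO_H by blast
  qed
  show "BO ?H \<subseteq> ?drop ` BO G"
  proof
    fix eps assume eps: "eps \<in> BO ?H"
    then have orient: "eps \<in> orientations ?H" and cyclic: "totally_cyclic ?H eps"
      unfolding BO_H by auto
    have fixed: "?drop eps = eps" using orient by (auto simp: orientations_def fun_eq_iff)
    have "totally_cyclic ?H eps \<longleftrightarrow> totally_cyclic G eps"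
      using totally_cyclic_delete_loop[OF loop, of eps False] unfolding fixed .
    moreover have "eps \<in> orientations G" using orient by (auto simp: orientations_def)
    ultimately have "eps \<in> BO G" unfolding BO_G using cyclic by blast
    with fixed show "eps \<in> ?drop ` BO G" by (metis image_eqI)
  qed
qed

text \<open>Part (ii): forgetting the loop lowers the in-degree at the loop's vertex
  by one, an injective operation on in-degree vectors.\<close>
lemma alpha_delete_loop:
  assumes wf: "wf_graph G" and e: "e \<in> edges G" and loop: "is_loop G e"
  shows "alpha G = alpha (delete_edge G e)"
proof -
  let ?H = "delete_edge G e" and ?drop = "\<lambda>eps::'b \<Rightarrow> bool. eps(e := False)"
  define w where "w = fst (ends G e)"
  have w: "w \<in> verts G" "\<And>eps. ohead G eps e = w"
    using wf e loop by (auto simp: wf_graph_def w_def ohead_def is_loop_def)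
  have fin: "finite (edges G)" "finite (edges ?H)" using wf by (auto simp: wf_graph_def)
  have "in_degree G eps = bump w (in_degree ?H (?drop eps))" for eps
    using in_degree_delete_edge[OF fin(1) e] w by metis
  then have "in_degree G = (\<lambda>eps. bump w (in_degree ?H (?drop eps)))" by (rule ext)
  then have "in_degree G ` BO G = bump w ` in_degree ?H ` ?drop ` BO G"
    by (simp only: image_image)
  then have "in_degree G ` BO G = bump w ` in_degree ?H ` BO ?H"
    unfolding BO_delete_loop[OF wf loop] .
  then show ?thesis
    unfolding alpha_eq_card_in_degrees[OF fin(1)] alpha_eq_card_in_degrees[OF fin(2)]
    by (simp only: card_bump_image)
qed


section \<open>Directed paths and in-degree surpluses\<close>

definition arcs :: "('v, 'e) mgraph \<Rightarrow> ('e \<Rightarrow> bool) \<Rightarrow> 'e set \<Rightarrow> ('v \<times> 'v) set" where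
  "arcs G eps F = {(otail G eps d, ohead G eps d) | d. d \<in> F}"

lemma arcs_mono: "F \<subseteq> F' \<Longrightarrow> arcs G eps F \<subseteq> arcs G eps F'"
  by (auto simp: arcs_def)

lemma oriented_ends_in_verts:
  "wf_graph G \<Longrightarrow> d \<in> edges G \<Longrightarrow> otail G eps d \<in> verts G \<and> ohead G eps d \<in> verts G"
  by (auto simp: wf_graph_def otail_def ohead_def)

lemma reachable_iff_crossed:
  assumes wf: "wf_graph G" and xy: "x \<in> verts G" "y \<in> verts G"
  shows "(x, y) \<in> (arcs G eps (edges G))\<^sup>* \<longleftrightarrow>
    (\<forall>S T. vpartition G S T \<longrightarrow> y \<in> S \<longrightarrow> x \<in> T \<longrightarrow> dir_edges G eps T S \<noteq> {})"
proof (intro iffI allI impI)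
  fix S T assume reach: "(x, y) \<in> (arcs G eps (edges G))\<^sup>*"
    and cut: "vpartition G S T" "y \<in> S" "x \<in> T"
  have "y \<notin> T" using cut by (auto simp: vpartition_def)
  from rtrancl_leaves_set[OF reach cut(3) this]
  obtain d where d: "d \<in> edges G" "otail G eps d \<in> T" "ohead G eps d \<notin> T"
    by (auto simp: arcs_def)
  then have "ohead G eps d \<in> S" using cut oriented_ends_in_verts[OF wf] by (auto simp: vpartition_def)
  then show "dir_edges G eps T S \<noteq> {}" using d by (auto simp: dir_edges_iff)
next
  assume crossed: "\<forall>S T. vpartition G S T \<longrightarrow> y \<in> S \<longrightarrow> x \<in> T \<longrightarrow> dir_edges G eps T S \<noteq> {}"
  show "(x, y) \<in> (arcs G eps (edges G))\<^sup>*"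
  proof (rule ccontr)
    assume unreachable: "(x, y) \<notin> (arcs G eps (edges G))\<^sup>*"
    define R where "R = {z\<in>verts G. (x, z) \<in> (arcs G eps (edges G))\<^sup>*}"
    have "vpartition G (verts G - R) R" "y \<in> verts G - R" "x \<in> R"
      using xy unreachable by (auto simp: vpartition_def R_def)
    then obtain d where "d \<in> dir_edges G eps R (verts G - R)" using crossed by blast
    then have d: "d \<in> edges G" "otail G eps d \<in> R" "ohead G eps d \<in> verts G - R"
      by (auto simp: dir_edges_iff)
    then have "(otail G eps d, ohead G eps d) \<in> arcs G eps (edges G)" by (auto simp: arcs_def)
    then have "(x, ohead G eps d) \<in> (arcs G eps (edges G))\<^sup>*"
      using d(2) by (auto simp: R_def intro: rtrancl_into_rtrancl)
    then show False using d(3) by (auto simp: R_def)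
  qed
qed

text \<open>Edge sets D of simple directed paths from x to y using edges of F.\<close>
inductive dpath :: "('v, 'e) mgraph \<Rightarrow> ('e \<Rightarrow> bool) \<Rightarrow> 'e set \<Rightarrow> 'v \<Rightarrow> 'v \<Rightarrow> 'e set \<Rightarrow> bool"
  for G eps F where
  nil: "dpath G eps F x x {}"
| cons: "dpath G eps F w y D \<Longrightarrow> d \<in> F \<Longrightarrow> otail G eps d = x \<Longrightarrow> ohead G eps d = w \<Longrightarrow>
     x \<notin> insert w (otail G eps ` D \<union> ohead G eps ` D) \<Longrightarrow> dpath G eps F x y (insert d D)"

lemma dpath_subset: "dpath G eps F x y D \<Longrightarrow> D \<subseteq> F \<and> finite D"
  by (induction rule: dpath.induct) auto

lemma dpath_degree_balance:
  "dpath G eps F x y D \<Longrightarrow>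
   card {d\<in>D. otail G eps d = z} + (if z = y then 1 else 0) =
   card {d\<in>D. ohead G eps d = z} + (if z = x then 1 else 0)"
proof (induction rule: dpath.induct)
  case (nil x) then show ?case by simp
next
  case (cons w y D d x)
  have "finite D" "d \<notin> D" using dpath_subset[OF cons(1)] cons(3,5) by auto
  moreover have "{d'\<in>insert d D. otail G eps d' = z} =
      (if x = z then insert d {d'\<in>D. otail G eps d' = z} else {d'\<in>D. otail G eps d' = z})"
    "{d'\<in>insert d D. ohead G eps d' = z} =
      (if w = z then insert d {d'\<in>D. ohead G eps d' = z} else {d'\<in>D. ohead G eps d' = z})"
    using cons(3,4) by auto
  ultimately show ?case using cons.IH by (auto split: if_splits)
qed

lemma dpath_reaches: "dpath G eps F x y D \<Longrightarrow> (x, y) \<in> (arcs G eps D)\<^sup>*"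
proof (induction rule: dpath.induct)
  case (nil x) then show ?case by simp
next
  case (cons w y D d x)
  have "(x, w) \<in> arcs G eps (insert d D)" using cons(3,4) by (auto simp: arcs_def)
  moreover have "(w, y) \<in> (arcs G eps (insert d D))\<^sup>*"
    using cons.IH rtrancl_mono[OF arcs_mono[of D "insert d D"]] by blast
  ultimately show ?case by (rule converse_rtrancl_into_rtrancl)
qed

lemma dpath_through_edge: "dpath G eps F x y D \<Longrightarrow> d \<in> D \<Longrightarrow>
    (x, otail G eps d) \<in> (arcs G eps D)\<^sup>* \<and> (ohead G eps d, y) \<in> (arcs G eps D)\<^sup>*"
proof (induction arbitrary: d rule: dpath.induct)
  case (nil x) then show ?case by simp
next
  case (cons w y D d0 x d)
  have mono: "(arcs G eps D)\<^sup>* \<subseteq> (arcs G eps (insert d0 D))\<^sup>*"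
    by (rule rtrancl_mono[OF arcs_mono]) blast
  have first: "(x, w) \<in> arcs G eps (insert d0 D)" using cons(3,4) by (auto simp: arcs_def)
  show ?case
  proof (cases "d = d0")
    case True
    then show ?thesis using cons(3,4) dpath_reaches[OF cons(1)] mono by auto
  next
    case False
    then have "(w, otail G eps d) \<in> (arcs G eps D)\<^sup>*" "(ohead G eps d, y) \<in> (arcs G eps D)\<^sup>*"
      using cons.IH cons.prems by auto
    then show ?thesis using mono first by (meson converse_rtrancl_into_rtrancl subsetD)
  qed
qed

lemma dpath_from_visited:
  "dpath G eps F w y D \<Longrightarrow> x \<in> insert w (otail G eps ` D \<union> ohead G eps ` D) \<Longrightarrow>
   \<exists>D'. dpath G eps F x y D'"
proof (induction rule: dpath.induct)
  case (nil x0) then show ?case by (auto intro: dpath.nil)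
next
  case (cons w y D d x0)
  show ?case
  proof (cases "x = x0")
    case True then show ?thesis using dpath.cons[OF cons(1-5)] by blast
  next
    case False
    then show ?thesis using cons.IH cons(3,4) cons.prems by auto
  qed
qed

text \<open>Reachability yields a simple path: shortcut at the first repeated vertex.\<close>
lemma dpath_exists: "(x, y) \<in> (arcs G eps F)\<^sup>* \<Longrightarrow> \<exists>D. dpath G eps F x y D"
proof (induction rule: converse_rtrancl_induct)
  case base then show ?case by (auto intro: dpath.nil)
next
  case (step x z)
  then obtain D where D: "dpath G eps F z y D" by blast
  obtain d where d: "d \<in> F" "otail G eps d = x" "ohead G eps d = z" using step(1) by (auto simp: arcs_def)
  show ?case
  proof (cases "x \<in> insert z (otail G eps ` D \<union> ohead G eps ` D)")
    case True then show ?thesis using dpath_from_visited[OF D] by blast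
  next
    case False then show ?thesis using dpath.cons[OF D d] by blast
  qed
qed

definition reverse_on :: "'e set \<Rightarrow> ('e \<Rightarrow> bool) \<Rightarrow> 'e \<Rightarrow> bool" where
  "reverse_on D eps = (\<lambda>d. if d \<in> D then \<not> eps d else eps d)"

lemma reverse_on_ends:
  "d \<in> D \<Longrightarrow> otail G (reverse_on D eps) d = ohead G eps d"
  "d \<in> D \<Longrightarrow> ohead G (reverse_on D eps) d = otail G eps d"
  "d \<notin> D \<Longrightarrow> otail G (reverse_on D eps) d = otail G eps d"
  "d \<notin> D \<Longrightarrow> ohead G (reverse_on D eps) d = ohead G eps d"
  by (auto simp: reverse_on_def otail_def ohead_def)

lemma reverse_dpath_in_degree:
  assumes fin: "finite (edges G)" and path: "dpath G eps (edges G) a b D"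
    and ab: "a \<in> verts G" "b \<in> verts G"
  shows "in_degree G (reverse_on D eps) z + (if z = b then 1 else 0) =
         in_degree G eps z + (if z = a then 1 else 0)"
proof (cases "z \<in> verts G")
  case False then show ?thesis using ab by (auto simp: in_degree_def)
next
  case True
  have "D \<subseteq> edges G" using dpath_subset[OF path] by blast
  then have "{d\<in>edges G. eps d \<noteq> reverse_on D eps d \<and> P d} = {d\<in>D. P d}" for P
    by (auto simp: reverse_on_def)
  then show ?thesis
    using in_degree_exchange[OF fin True, of "reverse_on D eps" eps] dpath_degree_balance[OF path, of z]
    by simp
qed

text \<open>Reversing a path from a to b keeps every cut that does not separate a
  and b crossed in each direction it was crossed before: a reversed crossing
  edge is compensated by another path edge crossing back.\<close>
lemma reverse_dpath_crossing:
  assumes wf: "wf_graph G" and path: "dpath G eps (edges G) a b D"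
    and cut: "vpartition G X Y" "a \<in> X \<longleftrightarrow> b \<in> X" "a \<in> verts G" "b \<in> verts G"
    and crossed: "dir_edges G eps X Y \<noteq> {}"
  shows "dir_edges G (reverse_on D eps) X Y \<noteq> {}"
proof -
  obtain d where d: "d \<in> edges G" "otail G eps d \<in> X" "ohead G eps d \<in> Y"
    using crossed by (auto simp: dir_edges_iff)
  have DE: "D \<subseteq> edges G" using dpath_subset[OF path] by blast
  have Y: "z \<in> Y \<longleftrightarrow> z \<in> verts G \<and> z \<notin> X" for z using cut(1) by (auto simp: vpartition_def)
  show ?thesis
  proof (cases "d \<in> D")
    case False
    then have "d \<in> dir_edges G (reverse_on D eps) X Y" using d by (simp add: dir_edges_iff reverse_on_ends)
    then show ?thesis by blast
  next
    case True
    have "\<exists>p q. (p, q) \<in> arcs G eps D \<and> p \<in> Y \<and> q \<notin> Y"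
    proof (cases "b \<in> X")
      case True
      then have "b \<notin> Y" using Y by blast
      moreover have "(ohead G eps d, b) \<in> (arcs G eps D)\<^sup>*"
        using dpath_through_edge[OF path \<open>d \<in> D\<close>] by blast
      ultimately show ?thesis using rtrancl_leaves_set[of _ b _ Y] d(3) by blast
    next
      case False
      then have "a \<in> Y" using cut Y by blast
      moreover have "otail G eps d \<notin> Y" using d(2) Y by blast
      moreover have "(a, otail G eps d) \<in> (arcs G eps D)\<^sup>*"
        using dpath_through_edge[OF path \<open>d \<in> D\<close>] by blast
      ultimately show ?thesis using rtrancl_leaves_set[of a "otail G eps d" _ Y] by blast
    qed
    then obtain d' where d': "d' \<in> D" "otail G eps d' \<in> Y" "ohead G eps d' \<notin> Y"
      by (auto simp: arcs_def)
    have "ohead G eps d' \<in> verts G" using oriented_ends_in_verts[OF wf, of d' eps] d'(1) DE by blast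
    then have "ohead G eps d' \<in> X" using d'(3) Y by blast
    then have "d' \<in> dir_edges G (reverse_on D eps) X Y"
      using d' DE by (auto simp: dir_edges_iff reverse_on_ends)
    then show ?thesis by blast
  qed
qed

lemma sum_card_fibres:
  assumes "finite A" "finite D"
  shows "(\<Sum>z\<in>A. card {d\<in>D. h d = z}) = card {d\<in>D. h d \<in> A}"
  using assms(1)
proof (induction rule: finite_induct)
  case empty then show ?case by simp
next
  case (insert z A)
  have "{d\<in>D. h d \<in> insert z A} = {d\<in>D. h d = z} \<union> {d\<in>D. h d \<in> A}" by auto
  moreover have "card (\<dots>) = card {d\<in>D. h d = z} + card {d\<in>D. h d \<in> A}"
    using assms(2) insert(2) by (intro card_Un_disjoint) auto
  ultimately show ?case using insert by simp
qed

lemma in_degree_sum_exchange: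
  fixes G :: "('v, 'e) mgraph" and eps eps' :: "'e \<Rightarrow> bool"
  assumes fin: "finite (edges G)" and R: "finite R" "R \<subseteq> verts G"
  defines "D \<equiv> {d\<in>edges G. eps d \<noteq> eps' d}"
  shows "(\<Sum>z\<in>R. in_degree G eps' z) + card {d\<in>D. ohead G eps d \<in> R} =
      (\<Sum>z\<in>R. in_degree G eps z) + card {d\<in>D. otail G eps d \<in> R}"
proof -
  have "finite D" using fin by (simp add: D_def)
  have "(\<Sum>z\<in>R. in_degree G eps' z + card {d\<in>D. ohead G eps d = z}) =
      (\<Sum>z\<in>R. in_degree G eps z + card {d\<in>D. otail G eps d = z})"
    using in_degree_exchange[OF fin, of _ eps' eps] R(2) by (intro sum.cong) (auto simp: D_def)
  then show ?thesis by (simp only: sum.distrib sum_card_fibres[OF R(1) \<open>finite D\<close>])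
qed

text \<open>A flow argument: if eps' has a larger in-degree than eps at a and the same
  in-degrees away from a and b, then b is reachable from a under eps.  Otherwise
  the set R reachable from a along the edges where eps and eps' differ would
  receive strictly more in-degree under eps' than under eps, although these edges
  can only leave R under eps.\<close>
lemma in_degree_surplus_reaches:
  assumes wf: "wf_graph G" and a: "a \<in> verts G"
    and surplus: "in_degree G eps a < in_degree G eps' a"
    and equal: "\<And>z. z \<noteq> a \<Longrightarrow> z \<noteq> b \<Longrightarrow> in_degree G eps' z = in_degree G eps z"
  shows "(a, b) \<in> (arcs G eps (edges G))\<^sup>*"
proof (rule ccontr)
  assume unreachable: "(a, b) \<notin> (arcs G eps (edges G))\<^sup>*"
  define D where "D = {d\<in>edges G. eps d \<noteq> eps' d}"
  define R where "R = {z\<in>verts G. (a, z) \<in> (arcs G eps D)\<^sup>*}"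
  have fin: "finite (edges G)" "finite D" "finite R" using wf by (auto simp: wf_graph_def D_def R_def)
  have "(arcs G eps D)\<^sup>* \<subseteq> (arcs G eps (edges G))\<^sup>*"
    by (rule rtrancl_mono[OF arcs_mono]) (auto simp: D_def)
  then have bR: "b \<notin> R" and aR: "a \<in> R" using unreachable a by (auto simp: R_def)
  have "{d\<in>D. otail G eps d \<in> R} \<subseteq> {d\<in>D. ohead G eps d \<in> R}"
  proof
    fix d assume d: "d \<in> {d\<in>D. otail G eps d \<in> R}"
    then have "(otail G eps d, ohead G eps d) \<in> arcs G eps D" by (auto simp: arcs_def)
    moreover have "ohead G eps d \<in> verts G"
      using d oriented_ends_in_verts[OF wf, of d eps] by (simp add: D_def)
    ultimately have "ohead G eps d \<in> R" using d by (auto simp: R_def intro: rtrancl_into_rtrancl)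
    then show "d \<in> {d\<in>D. ohead G eps d \<in> R}" using d by simp
  qed
  then have "card {d\<in>D. otail G eps d \<in> R} \<le> card {d\<in>D. ohead G eps d \<in> R}"
    by (rule card_mono[rotated]) (use fin in auto)
  moreover have "(\<Sum>z\<in>R. in_degree G eps' z) + card {d\<in>D. ohead G eps d \<in> R} =
      (\<Sum>z\<in>R. in_degree G eps z) + card {d\<in>D. otail G eps d \<in> R}"
    unfolding D_def by (rule in_degree_sum_exchange[OF fin(1,3)]) (auto simp: R_def)
  moreover have "(\<Sum>z\<in>R. in_degree G eps' z) = in_degree G eps' a + (\<Sum>z\<in>R - {a}. in_degree G eps' z)"
    by (rule sum.remove[OF fin(3) aR])
  moreover have "(\<Sum>z\<in>R - {a}. in_degree G eps' z) = (\<Sum>z\<in>R - {a}. in_degree G eps z)"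
    using equal bR by (intro sum.cong) auto
  moreover have "(\<Sum>z\<in>R. in_degree G eps z) = in_degree G eps a + (\<Sum>z\<in>R - {a}. in_degree G eps z)"
    by (rule sum.remove[OF fin(3) aR])
  ultimately show False using surplus by linarith
qed


section \<open>Deletion and contraction of an edge that is neither a loop nor a bridge\<close>

locale deletion_contraction =
  fixes G :: "('v, 'e) mgraph" and e :: 'e
  assumes wf: "wf_graph G" and connected: "connected_graph G" and edge: "e \<in> edges G"
    and not_bridge: "\<not> is_bridge G e" and not_loop: "\<not> is_loop G e"
begin

abbreviation "H \<equiv> delete_edge G e"
abbreviation "K \<equiv> contract_edge G e"

definition u where "u = fst (ends G e)"
definition v where "v = snd (ends G e)"

lemma ends_uv: "u \<in> verts G" "v \<in> verts G" "u \<noteq> v"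
  using wf edge not_loop by (auto simp: wf_graph_def u_def v_def is_loop_def)

lemma oriented_ends_e: "otail G eps e = (if eps e then u else v)" "ohead G eps e = (if eps e then v else u)"
  by (auto simp: otail_def ohead_def u_def v_def)

lemma wf_H: "wf_graph H"
  using wf by (auto simp: wf_graph_def)

lemma finite_edges: "finite (edges G)" "finite (edges H)"
  using wf by (auto simp: wf_graph_def)

lemma vpartition_H: "vpartition H S T \<longleftrightarrow> vpartition G S T"
  by (simp add: vpartition_def)

lemma partition_cases:
  assumes "vpartition G S T"
  obtains "u \<in> S \<longleftrightarrow> v \<in> S" | "u \<in> S" "v \<in> T" | "v \<in> S" "u \<in> T"
proof -
  have "u \<in> S \<or> u \<in> T" "v \<in> S \<or> v \<in> T" "\<not> (u \<in> S \<and> u \<in> T)" "\<not> (v \<in> S \<and> v \<in> T)"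
    using assms ends_uv unfolding vpartition_def by blast+
  then show ?thesis using that by blast
qed

text \<open>Since e is not a bridge, every cut of G still contains an edge of H.\<close>
lemma H_cut_nonempty:
  assumes "vpartition G S T"
  shows "cut_edges H S T \<noteq> {}"
proof -
  obtain a b where ab: "a \<in> S" "b \<in> T" using assms by (auto simp: vpartition_def)
  have "a \<in> verts G" "b \<in> verts G" "b \<notin> S" using assms ab by (auto simp: vpartition_def)
  then have "(a, b) \<in> (adj H)\<^sup>*"
    using connected not_bridge edge by (auto simp: connected_graph_def is_bridge_def)
  from rtrancl_leaves_set[OF this ab(1) \<open>b \<notin> S\<close>]
  obtain x y where xy: "(x, y) \<in> adj H" "x \<in> S" "y \<notin> S" by blast
  then obtain d where d: "d \<in> edges H" "ends G d = (x, y) \<or> ends G d = (y, x)"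
    by (auto simp: adj_def)
  then have "y \<in> verts G" using wf by (auto simp: wf_graph_def)
  then have "y \<in> T" using xy assms by (auto simp: vpartition_def)
  then have "d \<in> cut_edges H S T" using d xy by (auto simp: cut_edges_def)
  then show ?thesis by blast
qed

text \<open>Orientations of H in which every cut not separating u and v is crossed in
  both directions; they will turn out to be exactly BO(K).\<close>
definition nonsep_cyclic :: "('e \<Rightarrow> bool) \<Rightarrow> bool" where
  "nonsep_cyclic eps \<longleftrightarrow> (\<forall>S T. vpartition G S T \<longrightarrow> (u \<in> S \<longleftrightarrow> v \<in> S) \<longrightarrow>
      dir_edges H eps S T \<noteq> {} \<and> dir_edges H eps T S \<noteq> {})"

definition reaches :: "('e \<Rightarrow> bool) \<Rightarrow> 'v \<Rightarrow> 'v \<Rightarrow> bool" where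
  "reaches eps x y \<longleftrightarrow> (x, y) \<in> (arcs H eps (edges H))\<^sup>*"

lemma reaches_iff_crossed:
  "x \<in> verts G \<Longrightarrow> y \<in> verts G \<Longrightarrow> reaches eps x y \<longleftrightarrow>
    (\<forall>S T. vpartition G S T \<longrightarrow> y \<in> S \<longrightarrow> x \<in> T \<longrightarrow> dir_edges H eps T S \<noteq> {})"
  using reachable_iff_crossed[OF wf_H] unfolding reaches_def vpartition_H by simp

lemma reaches_crossing:
  assumes "reaches eps x y" "vpartition G S T" "y \<in> S" "x \<in> T"
  shows "dir_edges H eps T S \<noteq> {}"
proof -
  have "x \<in> verts G" "y \<in> verts G" using assms(2-4) by (auto simp: vpartition_def)
  then have "\<forall>S T. vpartition G S T \<longrightarrow> y \<in> S \<longrightarrow> x \<in> T \<longrightarrow> dir_edges H eps T S \<noteq> {}"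
    using assms(1) reaches_iff_crossed by blast
  then show ?thesis using assms(2-4) by blast
qed

lemma crossing_reaches:
  assumes "x \<in> verts G" "y \<in> verts G"
    and "\<And>S T. vpartition G S T \<Longrightarrow> y \<in> S \<Longrightarrow> x \<in> T \<Longrightarrow> dir_edges H eps T S \<noteq> {}"
  shows "reaches eps x y"
  using reaches_iff_crossed[OF assms(1,2)] assms(3) by blast

lemma nonsep_cyclicD:
  assumes "nonsep_cyclic eps" "vpartition G S T" "u \<in> S \<longleftrightarrow> v \<in> S"
  shows "dir_edges H eps S T \<noteq> {}" "dir_edges H eps T S \<noteq> {}"
  using assms unfolding nonsep_cyclic_def by blast+

text \<open>BO(H): cuts not separating u and v are handled by nonsep_cyclic, the
  others by directed paths between u and v in both directions.\<close>
theorem totally_cyclic_H_iff: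
  "totally_cyclic H eps \<longleftrightarrow> nonsep_cyclic eps \<and> reaches eps u v \<and> reaches eps v u"
proof
  assume tc: "totally_cyclic H eps"
  have crossed: "dir_edges H eps S T \<noteq> {}" if part: "vpartition G S T" for S T
  proof -
    have "vpartition H S T" "cut_edges H S T \<noteq> {}"
      using part H_cut_nonempty[OF part] by (simp_all add: vpartition_H)
    then show ?thesis using tc unfolding totally_cyclic_def by blast
  qed
  have "nonsep_cyclic eps" unfolding nonsep_cyclic_def
  proof (intro allI impI conjI)
    fix S T assume part: "vpartition G S T"
    then show "dir_edges H eps S T \<noteq> {}" by (rule crossed)
    from part have "vpartition G T S" by (rule vpartition_swap)
    then show "dir_edges H eps T S \<noteq> {}" by (rule crossed)
  qed
  moreover have "reaches eps u v" "reaches eps v u"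
    using crossing_reaches[OF ends_uv(1,2)] crossing_reaches[OF ends_uv(2,1)]
      crossed[OF vpartition_swap] by blast+
  ultimately show "nonsep_cyclic eps \<and> reaches eps u v \<and> reaches eps v u" by blast
next
  assume "nonsep_cyclic eps \<and> reaches eps u v \<and> reaches eps v u"
  then have nonsep: "nonsep_cyclic eps" and uv: "reaches eps u v" and vu: "reaches eps v u"
    by blast+
  show "totally_cyclic H eps" unfolding totally_cyclic_def vpartition_H
  proof (intro allI impI)
    fix S T assume part: "vpartition G S T"
    have swapped: "vpartition G T S" using part by (rule vpartition_swap)
    from part show "dir_edges H eps S T \<noteq> {} \<and> dir_edges H eps T S \<noteq> {}"
    proof (cases rule: partition_cases)
      case 1 then show ?thesis using nonsep_cyclicD[OF nonsep part] by blast
    next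
      case 2 then show ?thesis
        using reaches_crossing[OF vu part] reaches_crossing[OF uv swapped] by blast
    next
      case 3 then show ?thesis
        using reaches_crossing[OF uv part] reaches_crossing[OF vu swapped] by blast
    qed
  qed
qed

lemma dir_edges_delete: "dir_edges H (eps(e := False)) S T = dir_edges G eps S T - {e}"
proof (rule set_eqI)
  fix d show "d \<in> dir_edges H (eps(e := False)) S T \<longleftrightarrow> d \<in> dir_edges G eps S T - {e}"
    by (cases "d = e") (simp_all add: dir_edges_iff otail_fun_upd_other ohead_fun_upd_other)
qed

lemma separates_ends_e:
  "(u \<in> S \<longleftrightarrow> v \<in> S) \<longleftrightarrow> (otail G eps e \<in> S \<longleftrightarrow> ohead G eps e \<in> S)"
  by (auto simp: oriented_ends_e)

lemma oriented_ends_e_verts: "otail G eps e \<in> verts G" "ohead G eps e \<in> verts G"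
  using ends_uv by (auto simp: oriented_ends_e)

lemma e_dir_edges: "e \<in> dir_edges G eps S T \<longleftrightarrow> otail G eps e \<in> S \<and> ohead G eps e \<in> T"
  using edge by (simp add: dir_edges_iff)

text \<open>A totally cyclic orientation of G restricts to H so that cuts not
  separating u and v stay crossed both ways, and a directed path leads back
  from the head of e to its tail (the cuts separating them are crossed back
  by an edge other than e).\<close>
lemma totally_cyclic_G_restrict:
  assumes tc: "totally_cyclic G eps"
  shows "nonsep_cyclic (eps(e := False))"
    and "reaches (eps(e := False)) (ohead G eps e) (otail G eps e)"
proof -
  let ?eps0 = "eps(e := False)" and ?t = "otail G eps e" and ?h = "ohead G eps e"
  have crossed_H: "dir_edges H ?eps0 S T \<noteq> {}"
    if part: "vpartition G S T" and not_e: "\<not> (?t \<in> S \<and> ?h \<in> T)" for S T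
  proof -
    have "cut_edges G S T \<noteq> {}" using H_cut_nonempty[OF part] by (auto simp: cut_edges_def)
    then have "dir_edges G eps S T \<noteq> {}" using tc part unfolding totally_cyclic_def by blast
    moreover have "e \<notin> dir_edges G eps S T" using e_dir_edges not_e by blast
    ultimately show ?thesis unfolding dir_edges_delete by blast
  qed
  show "nonsep_cyclic ?eps0" unfolding nonsep_cyclic_def
  proof (intro allI impI conjI)
    fix S T assume part: "vpartition G S T" and nonsep: "u \<in> S \<longleftrightarrow> v \<in> S"
    have swapped: "vpartition G T S" using part by (rule vpartition_swap)
    have "?t \<in> S \<longleftrightarrow> ?h \<in> S" using nonsep separates_ends_e[of S eps] by blast
    moreover have "\<not> (?t \<in> S \<and> ?t \<in> T)" "\<not> (?h \<in> S \<and> ?h \<in> T)"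
      using part by (auto simp: vpartition_def)
    ultimately have not_e: "\<not> (?t \<in> S \<and> ?h \<in> T)" "\<not> (?t \<in> T \<and> ?h \<in> S)" by blast+
    show "dir_edges H ?eps0 S T \<noteq> {}" by (rule crossed_H[OF part not_e(1)])
    show "dir_edges H ?eps0 T S \<noteq> {}" by (rule crossed_H[OF swapped not_e(2)])
  qed
  show "reaches ?eps0 ?h ?t"
  proof (rule crossing_reaches[OF oriented_ends_e_verts(2,1)])
    fix S T assume part: "vpartition G S T" "?t \<in> S" "?h \<in> T"
    have swapped: "vpartition G T S" using part(1) by (rule vpartition_swap)
    have "\<not> (?t \<in> T \<and> ?h \<in> S)" using part by (auto simp: vpartition_def)
    then show "dir_edges H ?eps0 T S \<noteq> {}" by (rule crossed_H[OF swapped])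
  qed
qed

text \<open>Conversely, such an orientation of H becomes totally cyclic on G when e
  is added: a cut separating the ends of e is crossed by e one way and by the
  path from its head to its tail the other way.\<close>
lemma totally_cyclic_G_extend:
  assumes nonsep: "nonsep_cyclic (eps(e := False))"
    and closing: "reaches (eps(e := False)) (ohead G eps e) (otail G eps e)"
  shows "totally_cyclic G eps"
  unfolding totally_cyclic_def
proof (intro allI impI)
  let ?eps0 = "eps(e := False)" and ?t = "otail G eps e" and ?h = "ohead G eps e"
  fix S T assume part: "vpartition G S T"
  have swapped: "vpartition G T S" using part by (rule vpartition_swap)
  have sub: "dir_edges H ?eps0 X Y \<subseteq> dir_edges G eps X Y" for X Y
    unfolding dir_edges_delete by blast
  consider "?t \<in> S \<longleftrightarrow> ?h \<in> S" | "?t \<in> S" "?h \<in> T" | "?h \<in> S" "?t \<in> T"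
    using part oriented_ends_e_verts by (auto simp: vpartition_def)
  then show "dir_edges G eps S T \<noteq> {} \<and> dir_edges G eps T S \<noteq> {}"
  proof cases
    case 1
    then have "u \<in> S \<longleftrightarrow> v \<in> S" using separates_ends_e[of S eps] by blast
    then show ?thesis using nonsep_cyclicD[OF nonsep part] sub by blast
  next
    case 2
    then show ?thesis using e_dir_edges[of eps S T] reaches_crossing[OF closing part] sub by blast
  next
    case 3
    then show ?thesis using e_dir_edges[of eps T S] reaches_crossing[OF closing swapped] sub by blast
  qed
qed

theorem totally_cyclic_G_iff:
  "totally_cyclic G eps \<longleftrightarrow> nonsep_cyclic (eps(e := False)) \<and>
     reaches (eps(e := False)) (ohead G eps e) (otail G eps e)"
proof
  assume "totally_cyclic G eps"
  then show "nonsep_cyclic (eps(e := False)) \<and> reaches (eps(e := False)) (ohead G eps e) (otail G eps e)"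
    using totally_cyclic_G_restrict by simp
next
  assume "nonsep_cyclic (eps(e := False)) \<and> reaches (eps(e := False)) (ohead G eps e) (otail G eps e)"
  then show "totally_cyclic G eps" using totally_cyclic_G_extend by simp
qed

end


context deletion_contraction
begin

definition merge :: "'v \<Rightarrow> 'v" where "merge x = (if x = v then u else x)"

lemma K_verts: "verts K = verts G - {v}"
proof -
  have "verts K = merge ` verts G" by (simp add: contract_edge_def Let_def merge_def u_def v_def)
  also have "\<dots> = verts G - {v}" using ends_uv by (auto simp: merge_def image_def)
  finally show ?thesis .
qed

lemma K_edges: "edges K = edges H"
  by (simp add: contract_edge_def Let_def)

lemma K_oriented_ends: "otail K eps d = merge (otail G eps d)" "ohead K eps d = merge (ohead G eps d)"
  by (auto simp: otail_def ohead_def contract_edge_def Let_def merge_def u_def v_def)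

lemma orientations_K: "orientations K = orientations H"
  by (simp add: orientations_def K_edges)

definition lift :: "'v set \<Rightarrow> 'v set" where "lift X = {x\<in>verts G. merge x \<in> X}"

lemma K_cuts:
  "cut_edges K S' T' = cut_edges H (lift S') (lift T')"
  "dir_edges K eps S' T' = dir_edges H eps (lift S') (lift T')"
proof -
  have "otail G eps d \<in> verts G \<and> ohead G eps d \<in> verts G" if "d \<in> edges H" for d
    using that oriented_ends_in_verts[OF wf_H] by simp
  then show "cut_edges K S' T' = cut_edges H (lift S') (lift T')"
      "dir_edges K eps S' T' = dir_edges H eps (lift S') (lift T')"
    by (auto simp: lift_def cut_edges_oriented[of _ _ _ _ eps] dir_edges_iff K_edges K_oriented_ends)
qed

lemma K_partition_of_nonsep:
  assumes part: "vpartition G S T" and nonsep: "u \<in> S \<longleftrightarrow> v \<in> S"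
  shows "vpartition K (S - {v}) (T - {v})" "lift (S - {v}) = S" "lift (T - {v}) = T"
proof -
  have nonsep': "u \<in> T \<longleftrightarrow> v \<in> T" using part nonsep ends_uv by (auto simp: vpartition_def)
  show "lift (S - {v}) = S" using part nonsep ends_uv by (auto simp: lift_def merge_def vpartition_def)
  show "lift (T - {v}) = T" using part nonsep' ends_uv by (auto simp: lift_def merge_def vpartition_def)
  show "vpartition K (S - {v}) (T - {v})"
    unfolding vpartition_def K_verts
  proof (intro conjI)
    have "S \<union> T = verts G" "S \<inter> T = {}" using part by (simp_all add: vpartition_def)
    then show "(S - {v}) \<union> (T - {v}) = verts G - {v}" by blast
    from \<open>S \<inter> T = {}\<close> show "(S - {v}) \<inter> (T - {v}) = {}" by blast
    show "S - {v} \<noteq> {}" using part nonsep ends_uv(3)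
      unfolding vpartition_def by (cases "v \<in> S") auto
    show "T - {v} \<noteq> {}" using part nonsep' ends_uv(3)
      unfolding vpartition_def by (cases "v \<in> T") auto
  qed
qed

lemma lift_partition_of_K:
  assumes part': "vpartition K S' T'"
  shows "vpartition G (lift S') (lift T')" "u \<in> lift S' \<longleftrightarrow> v \<in> lift S'"
proof -
  have sides: "S' \<union> T' = verts G - {v}" "S' \<inter> T' = {}" "S' \<noteq> {}" "T' \<noteq> {}"
    using part' unfolding vpartition_def K_verts by auto
  have merge_V: "x \<in> verts G \<Longrightarrow> merge x \<in> verts G - {v}" for x
    using ends_uv by (auto simp: merge_def)
  have lift_sup: "X \<subseteq> lift X" if "X \<subseteq> verts G - {v}" for X
    using that by (auto simp: lift_def merge_def)
  show "vpartition G (lift S') (lift T')"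
    unfolding vpartition_def
  proof (intro conjI)
    show "lift S' \<union> lift T' = verts G" using merge_V sides(1) unfolding lift_def by auto
    show "lift S' \<inter> lift T' = {}" using sides(2) unfolding lift_def by auto
    have "S' \<subseteq> lift S'" "T' \<subseteq> lift T'" using sides(1) lift_sup by blast+
    then show "lift S' \<noteq> {}" "lift T' \<noteq> {}" using sides(3,4) by blast+
  qed
  show "u \<in> lift S' \<longleftrightarrow> v \<in> lift S'" using ends_uv by (auto simp: lift_def merge_def)
qed

theorem totally_cyclic_K_iff: "totally_cyclic K eps \<longleftrightarrow> nonsep_cyclic eps"
proof
  assume tc: "totally_cyclic K eps"
  show "nonsep_cyclic eps" unfolding nonsep_cyclic_def
  proof (intro allI impI)
    fix S T assume part: "vpartition G S T" and nonsep: "u \<in> S \<longleftrightarrow> v \<in> S"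
    note K_part = K_partition_of_nonsep[OF part nonsep]
    have "cut_edges K (S - {v}) (T - {v}) \<noteq> {}"
      using H_cut_nonempty[OF part] by (simp add: K_cuts K_part)
    then have "dir_edges K eps (S - {v}) (T - {v}) \<noteq> {} \<and> dir_edges K eps (T - {v}) (S - {v}) \<noteq> {}"
      using tc K_part(1) unfolding totally_cyclic_def by blast
    then show "dir_edges H eps S T \<noteq> {} \<and> dir_edges H eps T S \<noteq> {}"
      by (simp add: K_cuts K_part)
  qed
next
  assume nonsep: "nonsep_cyclic eps"
  show "totally_cyclic K eps" unfolding totally_cyclic_def
  proof (intro allI impI)
    fix S' T' assume "vpartition K S' T'"
    note lifted = lift_partition_of_K[OF this]
    show "dir_edges K eps S' T' \<noteq> {} \<and> dir_edges K eps T' S' \<noteq> {}"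
      using nonsep_cyclicD[OF nonsep lifted] by (simp add: K_cuts)
  qed
qed

definition merge_degrees :: "('v \<Rightarrow> nat) \<Rightarrow> 'v \<Rightarrow> nat" where
  "merge_degrees \<delta> = \<delta>(u := \<delta> u + \<delta> v, v := 0)"

lemma in_degree_K: "in_degree K eps = merge_degrees (in_degree H eps)"
proof
  fix x
  show "in_degree K eps x = merge_degrees (in_degree H eps) x"
  proof (cases "x \<in> verts G - {v}")
    case False
    then show ?thesis using ends_uv unfolding in_degree_def K_verts merge_degrees_def
      by (cases "x = v") auto
  next
    case x: True
    show ?thesis
    proof (cases "x = u")
      case True
      have "{d\<in>edges H. merge (ohead G eps d) = u} =
          {d\<in>edges H. ohead G eps d = u} \<union> {d\<in>edges H. ohead G eps d = v}"
        by (auto simp: merge_def)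
      moreover have "card (\<dots>) = card {d\<in>edges H. ohead G eps d = u} + card {d\<in>edges H. ohead G eps d = v}"
        using finite_edges ends_uv by (intro card_Un_disjoint) auto
      ultimately show ?thesis using True ends_uv
        by (simp add: in_degree_def merge_degrees_def K_verts K_edges K_oriented_ends)
    next
      case False
      have "{d\<in>edges H. merge (ohead G eps d) = x} = {d\<in>edges H. ohead G eps d = x}"
        using False x by (auto simp: merge_def)
      then show ?thesis using False x ends_uv
        by (simp add: in_degree_def merge_degrees_def K_verts K_edges K_oriented_ends)
    qed
  qed
qed

end


context deletion_contraction
begin

definition nonsep_orientations :: "('e \<Rightarrow> bool) set" where
  "nonsep_orientations = {eps \<in> orientations H. nonsep_cyclic eps}"

lemma finite_nonsep_orientations: "finite nonsep_orientations"
  using finite_orientations[OF finite_edges(2)] by (simp add: nonsep_orientations_def)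

lemma reverse_u_v_path:
  assumes eps: "eps \<in> nonsep_orientations" and uv: "reaches eps u v"
  shows "\<exists>eps'\<in>nonsep_orientations. \<forall>z.
    in_degree H eps' z + (if z = v then 1 else 0) = in_degree H eps z + (if z = u then 1 else 0)"
proof -
  obtain D where path: "dpath H eps (edges H) u v D"
    using dpath_exists[of u v H eps "edges H"] uv unfolding reaches_def by blast
  have "D \<subseteq> edges H" using dpath_subset[OF path] by blast
  then have "reverse_on D eps \<in> orientations H"
    using eps by (auto simp: nonsep_orientations_def orientations_def reverse_on_def)
  moreover have "nonsep_cyclic (reverse_on D eps)" unfolding nonsep_cyclic_def
  proof (intro allI impI conjI)
    fix S T assume part: "vpartition G S T" and nonsep: "u \<in> S \<longleftrightarrow> v \<in> S"
    have swapped: "vpartition G T S" using part by (rule vpartition_swap)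
    have nonsep': "u \<in> T \<longleftrightarrow> v \<in> T" using part nonsep ends_uv by (auto simp: vpartition_def)
    have cyclic: "nonsep_cyclic eps" using eps by (simp add: nonsep_orientations_def)
    show "dir_edges H (reverse_on D eps) S T \<noteq> {}"
      using reverse_dpath_crossing[OF wf_H path _ nonsep] nonsep_cyclicD(1)[OF cyclic part nonsep]
        part ends_uv by (simp add: vpartition_H)
    show "dir_edges H (reverse_on D eps) T S \<noteq> {}"
      using reverse_dpath_crossing[OF wf_H path _ nonsep'] nonsep_cyclicD(2)[OF cyclic part nonsep]
        swapped ends_uv by (simp add: vpartition_H)
  qed
  moreover have "in_degree H (reverse_on D eps) z + (if z = v then 1 else 0) =
      in_degree H eps z + (if z = u then 1 else 0)" for z
    using reverse_dpath_in_degree[OF finite_edges(2) path] ends_uv by simp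
  ultimately show ?thesis unfolding nonsep_orientations_def by blast
qed

lemma reaches_of_surplus:
  assumes "a \<in> verts G" "in_degree H eps a < in_degree H eps' a"
    and "\<And>z. z \<noteq> a \<Longrightarrow> z \<noteq> b \<Longrightarrow> in_degree H eps' z = in_degree H eps z"
  shows "reaches eps a b"
  using in_degree_surplus_reaches[OF wf_H] assms unfolding reaches_def by simp

lemma reaches_u_v_in_degree_invariant:
  assumes "eps \<in> nonsep_orientations" "eps1 \<in> nonsep_orientations"
    and same: "in_degree H eps = in_degree H eps1" and "reaches eps1 u v"
  shows "reaches eps u v"
proof -
  obtain eps2 where shifted: "\<And>z. in_degree H eps2 z + (if z = v then 1 else 0) =
      in_degree H eps1 z + (if z = u then 1 else 0)"
    using reverse_u_v_path[OF assms(2,4)] by blast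
  show ?thesis
  proof (rule reaches_of_surplus[OF ends_uv(1)])
    show "in_degree H eps u < in_degree H eps2 u" using shifted[of u] ends_uv same by simp
    show "in_degree H eps2 z = in_degree H eps z" if "z \<noteq> u" "z \<noteq> v" for z
      using shifted[of z] that same by simp
  qed
qed

lemma closed_set_separates:
  assumes cyclic: "nonsep_cyclic eps"
    and closed: "\<And>d. d \<in> edges H \<Longrightarrow> otail G eps d \<in> X \<Longrightarrow> ohead G eps d \<in> X"
    and proper: "X \<subseteq> verts G" "X \<noteq> {}" "X \<noteq> verts G"
  shows "u \<in> X \<longleftrightarrow> v \<notin> X"
proof (rule ccontr)
  assume "\<not> (u \<in> X \<longleftrightarrow> v \<notin> X)"
  then have "u \<in> X \<longleftrightarrow> v \<in> X" by blast
  moreover have part: "vpartition G X (verts G - X)" using proper by (auto simp: vpartition_def)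
  ultimately obtain d where "d \<in> dir_edges H eps X (verts G - X)" using nonsep_cyclicD(1)[OF cyclic] by blast
  then show False using closed by (auto simp: dir_edges_iff)
qed

lemma reaches_closed:
  assumes "d \<in> edges H" "otail G eps d \<in> {z\<in>verts G. reaches eps x z}"
  shows "ohead G eps d \<in> {z\<in>verts G. reaches eps x z}"
proof -
  have "(otail G eps d, ohead G eps d) \<in> arcs H eps (edges H)" using assms(1) by (auto simp: arcs_def)
  then have "reaches eps x (ohead G eps d)"
    using assms(2) unfolding reaches_def by (auto intro: rtrancl_into_rtrancl)
  then show ?thesis using oriented_ends_in_verts[OF wf_H assms(1)] by simp
qed

text \<open>If u does not reach v, then v reaches u: otherwise the vertices reachable
  from u and those reachable from v would be disjoint closed sets covering all
  vertices, and H has an edge between them.\<close>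
lemma reaches_v_u_if_not_u_v:
  assumes cyclic: "nonsep_cyclic eps" and not_uv: "\<not> reaches eps u v"
  shows "reaches eps v u"
proof (rule ccontr)
  assume not_vu: "\<not> reaches eps v u"
  define Ru where "Ru = {z\<in>verts G. reaches eps u z}"
  define Rv where "Rv = {z\<in>verts G. reaches eps v z}"
  have closed_u: "ohead G eps d \<in> Ru" if "d \<in> edges H" "otail G eps d \<in> Ru" for d
    using reaches_closed that unfolding Ru_def by blast
  have closed_v: "ohead G eps d \<in> Rv" if "d \<in> edges H" "otail G eps d \<in> Rv" for d
    using reaches_closed that unfolding Rv_def by blast
  have members: "u \<in> Ru" "v \<in> Rv" "v \<notin> Ru" "u \<notin> Rv"
    using ends_uv not_uv not_vu by (auto simp: Ru_def Rv_def reaches_def)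
  have in_V: "Ru \<subseteq> verts G" "Rv \<subseteq> verts G" by (auto simp: Ru_def Rv_def)
  have disjoint: "Ru \<inter> Rv = {}"
  proof (rule ccontr)
    assume "Ru \<inter> Rv \<noteq> {}"
    moreover have "Ru \<inter> Rv \<noteq> verts G" using members ends_uv by blast
    ultimately have "u \<in> Ru \<inter> Rv \<longleftrightarrow> v \<notin> Ru \<inter> Rv"
      using closed_set_separates[OF cyclic, of "Ru \<inter> Rv"] closed_u closed_v in_V by blast
    then show False using members by blast
  qed
  have cover: "Ru \<union> Rv = verts G"
  proof (rule ccontr)
    assume "Ru \<union> Rv \<noteq> verts G"
    moreover have "Ru \<union> Rv \<noteq> {}" using members by blast
    ultimately have "u \<in> Ru \<union> Rv \<longleftrightarrow> v \<notin> Ru \<union> Rv"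
      using closed_set_separates[OF cyclic, of "Ru \<union> Rv"] closed_u closed_v in_V by blast
    then show False using members by blast
  qed
  have "vpartition G Ru Rv" using disjoint cover members by (auto simp: vpartition_def)
  then obtain d where "d \<in> cut_edges H Ru Rv" using H_cut_nonempty by blast
  then have "d \<in> edges H" and
    "(otail G eps d \<in> Ru \<and> ohead G eps d \<in> Rv) \<or> (otail G eps d \<in> Rv \<and> ohead G eps d \<in> Ru)"
    unfolding cut_edges_oriented[of d H Ru Rv eps] by simp_all
  then show False using closed_u closed_v disjoint by blast
qed

end


section \<open>Counting in-degree vectors\<close>

context deletion_contraction
begin

lemma BO_H_eq: "BO H = {eps\<in>nonsep_orientations. reaches eps u v \<and> reaches eps v u}"
  using BO_eq_totally_cyclic[OF finite_edges(2)] totally_cyclic_H_iff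
  by (auto simp: nonsep_orientations_def)

lemma BO_K_eq: "BO K = nonsep_orientations"
  using BO_eq_totally_cyclic[of K] finite_edges(2) totally_cyclic_K_iff
  by (auto simp: nonsep_orientations_def K_edges orientations_K)

lemma nonsep_orientation_e: "eps \<in> nonsep_orientations \<Longrightarrow> \<not> eps e"
  by (simp add: nonsep_orientations_def orientations_def)

lemma in_degree_G:
  "in_degree G eps = bump (ohead G eps e) (in_degree H (eps(e := False)))"
  using in_degree_delete_edge[OF finite_edges(1) edge] ends_uv by (simp add: oriented_ends_e)

lemma BO_G_restrict:
  assumes "eps \<in> BO G"
  shows "eps(e := False) \<in> nonsep_orientations"
    and "reaches (eps(e := False)) (ohead G eps e) (otail G eps e)"
proof -
  have "eps \<in> orientations G" "totally_cyclic G eps"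
    using assms BO_eq_totally_cyclic[OF finite_edges(1)] by auto
  then show "eps(e := False) \<in> nonsep_orientations"
    and "reaches (eps(e := False)) (ohead G eps e) (otail G eps e)"
    using totally_cyclic_G_iff by (auto simp: nonsep_orientations_def orientations_def)
qed

lemma BO_G_extend:
  assumes eps: "eps \<in> nonsep_orientations"
    and closing: "reaches eps (ohead G (eps(e := b)) e) (otail G (eps(e := b)) e)"
  shows "eps(e := b) \<in> BO G"
proof -
  have "eps e = False" using eps by (auto simp: nonsep_orientations_def orientations_def)
  then have restrict: "(eps(e := b))(e := False) = eps" by (auto simp: fun_eq_iff)
  have "totally_cyclic G (eps(e := b))"
    unfolding totally_cyclic_G_iff restrict using eps closing by (simp add: nonsep_orientations_def)
  moreover have "eps(e := b) \<in> orientations G"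
    using eps edge by (auto simp: nonsep_orientations_def orientations_def)
  ultimately show ?thesis using BO_eq_totally_cyclic[OF finite_edges(1)] by blast
qed

text \<open>The in-degree vectors of BO(G): orient e from u to v (adding one at v) in
  an orientation where v reaches u, or from v to u where u reaches v.\<close>
lemma in_degrees_BO_G:
  "in_degree G ` BO G =
     bump v ` in_degree H ` {eps\<in>nonsep_orientations. reaches eps v u} \<union>
     bump u ` in_degree H ` {eps\<in>nonsep_orientations. reaches eps u v}"
    (is "_ = ?A \<union> ?B")
proof
  show "in_degree G ` BO G \<subseteq> ?A \<union> ?B"
  proof (rule image_subsetI)
    fix eps assume "eps \<in> BO G"
    note restrict = BO_G_restrict[OF this]
    show "in_degree G eps \<in> ?A \<union> ?B"
    proof (cases "eps e")
      case True
      then have "in_degree G eps = bump v (in_degree H (eps(e := False)))"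
        by (simp add: in_degree_G oriented_ends_e)
      then show ?thesis using restrict True by (simp add: oriented_ends_e)
    next
      case False
      then have "in_degree G eps = bump u (in_degree H (eps(e := False)))"
        by (simp add: in_degree_G oriented_ends_e)
      then show ?thesis using restrict False by (simp add: oriented_ends_e)
    qed
  qed
  have restrict: "(eps(e := b))(e := False) = eps" if "eps \<in> nonsep_orientations" for eps b
    using that by (auto simp: nonsep_orientations_def orientations_def fun_eq_iff)
  show "?A \<union> ?B \<subseteq> in_degree G ` BO G"
    unfolding image_image
  proof (intro Un_least image_subsetI)
    fix eps assume "eps \<in> {eps\<in>nonsep_orientations. reaches eps v u}"
    then have "eps(e := True) \<in> BO G" "in_degree G (eps(e := True)) = bump v (in_degree H eps)"
      using BO_G_extend[of eps True] restrict by (simp_all add: in_degree_G oriented_ends_e)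
    then show "bump v (in_degree H eps) \<in> in_degree G ` BO G" by (metis image_eqI)
  next
    fix eps assume "eps \<in> {eps\<in>nonsep_orientations. reaches eps u v}"
    then have "eps(e := False) \<in> BO G" "in_degree G (eps(e := False)) = bump u (in_degree H eps)"
      using BO_G_extend[of eps False] restrict nonsep_orientation_e[of eps]
      by (simp_all add: in_degree_G oriented_ends_e)
    then show "bump u (in_degree H eps) \<in> in_degree G ` BO G" by (metis image_eqI)
  qed
qed

text \<open>The second part is redundant: reversing a u-v path turns an orientation
  of the second kind into one of the first kind with the same vector.\<close>
lemma bump_u_subset_bump_v:
  "bump u ` in_degree H ` {eps\<in>nonsep_orientations. reaches eps u v} \<subseteq>
   bump v ` in_degree H ` {eps\<in>nonsep_orientations. reaches eps v u}"
proof (intro image_subsetI)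
  fix \<delta> assume "\<delta> \<in> in_degree H ` {eps\<in>nonsep_orientations. reaches eps u v}"
  then obtain eps where eps: "eps \<in> nonsep_orientations" "reaches eps u v" "\<delta> = in_degree H eps"
    by blast
  obtain eps' where eps': "eps' \<in> nonsep_orientations" and
    shifted: "\<And>z. in_degree H eps' z + (if z = v then 1 else 0) = in_degree H eps z + (if z = u then 1 else 0)"
    using reverse_u_v_path[OF eps(1,2)] by blast
  have "bump v (in_degree H eps') = bump u (in_degree H eps)"
  proof
    fix z show "bump v (in_degree H eps') z = bump u (in_degree H eps) z"
      using shifted[of z] ends_uv(3) by (auto simp: bump_def)
  qed
  moreover have "reaches eps' v u"
  proof (rule reaches_of_surplus[OF ends_uv(2)])
    show "in_degree H eps' v < in_degree H eps v" using shifted[of v] ends_uv(3) by simp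
    show "in_degree H eps z = in_degree H eps' z" if "z \<noteq> v" "z \<noteq> u" for z
      using shifted[of z] that by simp
  qed
  ultimately show "bump u \<delta> \<in> bump v ` in_degree H ` {eps\<in>nonsep_orientations. reaches eps v u}"
    using eps' eps(3) by (metis (mono_tags, lifting) image_eqI mem_Collect_eq)
qed

lemma alpha_G: "alpha G = card (in_degree H ` {eps\<in>nonsep_orientations. reaches eps v u})"
proof -
  have "in_degree G ` BO G = bump v ` in_degree H ` {eps\<in>nonsep_orientations. reaches eps v u}"
    unfolding in_degrees_BO_G using bump_u_subset_bump_v by (rule Un_absorb2)
  then show ?thesis by (simp add: alpha_eq_card_in_degrees[OF finite_edges(1)] card_bump_image)
qed

text \<open>Orientations in which v reaches u split into those in BO(H) and those in
  which u does not reach v; by invariance, no in-degree vector occurs in both.\<close>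
lemma card_split_reaches_u_v:
  "card (in_degree H ` {eps\<in>nonsep_orientations. reaches eps v u}) =
     card (in_degree H ` {eps\<in>nonsep_orientations. reaches eps u v \<and> reaches eps v u}) +
     card (in_degree H ` {eps\<in>nonsep_orientations. \<not> reaches eps u v})"
proof -
  let ?both = "{eps\<in>nonsep_orientations. reaches eps u v \<and> reaches eps v u}"
  let ?not_uv = "{eps\<in>nonsep_orientations. \<not> reaches eps u v}"
  have "{eps\<in>nonsep_orientations. reaches eps v u} = ?both \<union> ?not_uv"
  proof (rule set_eqI)
    fix eps
    show "eps \<in> {eps\<in>nonsep_orientations. reaches eps v u} \<longleftrightarrow> eps \<in> ?both \<union> ?not_uv"
      using reaches_v_u_if_not_u_v[of eps] by (auto simp: nonsep_orientations_def)
  qed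
  moreover have "in_degree H ` ?both \<inter> in_degree H ` ?not_uv = {}"
  proof (rule ccontr)
    assume "in_degree H ` ?both \<inter> in_degree H ` ?not_uv \<noteq> {}"
    then obtain \<delta> where \<delta>: "\<delta> \<in> in_degree H ` ?both" "\<delta> \<in> in_degree H ` ?not_uv" by blast
    from \<delta>(1) obtain eps1 where eps1: "eps1 \<in> ?both" "\<delta> = in_degree H eps1" by blast
    from \<delta>(2) obtain eps2 where eps2: "eps2 \<in> ?not_uv" "\<delta> = in_degree H eps2" by blast
    have "reaches eps2 u v"
      using reaches_u_v_in_degree_invariant[of eps2 eps1] eps1 eps2 by simp
    then show False using eps2(1) by simp
  qed
  moreover have "finite (in_degree H ` ?both)" "finite (in_degree H ` ?not_uv)"
    using finite_nonsep_orientations by auto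
  ultimately show ?thesis by (simp add: image_Un card_Un_disjoint)
qed

text \<open>Among orientations in which u does not reach v, the in-degree vector is
  determined by its merged version: two such vectors with the same merge agree
  except for a unit shifted between u and v, and a surplus at u would force a
  directed u-v path.\<close>
lemma merge_inj_not_reaching:
  "inj_on merge_degrees (in_degree H ` {eps\<in>nonsep_orientations. \<not> reaches eps u v})"
proof (rule inj_onI)
  fix \<delta>1 \<delta>2 assume "\<delta>1 \<in> in_degree H ` {eps\<in>nonsep_orientations. \<not> reaches eps u v}"
    "\<delta>2 \<in> in_degree H ` {eps\<in>nonsep_orientations. \<not> reaches eps u v}"
    and merged: "merge_degrees \<delta>1 = merge_degrees \<delta>2"
  then obtain eps1 eps2 where eps: "\<not> reaches eps1 u v" "\<delta>1 = in_degree H eps1"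
    "\<not> reaches eps2 u v" "\<delta>2 = in_degree H eps2" by blast
  have off_uv: "\<delta>1 z = \<delta>2 z" if "z \<noteq> u" "z \<noteq> v" for z
    using fun_cong[OF merged, of z] that by (simp add: merge_degrees_def)
  have sum_uv: "\<delta>1 u + \<delta>1 v = \<delta>2 u + \<delta>2 v"
    using fun_cong[OF merged, of u] ends_uv(3) by (simp add: merge_degrees_def)
  have no_surplus: "\<not> in_degree H eps u < in_degree H eps' u"
    if "\<not> reaches eps u v" "\<And>z. z \<noteq> u \<Longrightarrow> z \<noteq> v \<Longrightarrow> in_degree H eps' z = in_degree H eps z"
    for eps eps'
    using reaches_of_surplus[OF ends_uv(1), of eps eps' v] that by blast
  have "\<not> \<delta>1 u < \<delta>2 u" using no_surplus[of eps1 eps2] eps off_uv by simp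
  moreover have "\<not> \<delta>2 u < \<delta>1 u" using no_surplus[of eps2 eps1] eps off_uv by simp
  ultimately have "\<delta>1 u = \<delta>2 u" "\<delta>1 v = \<delta>2 v" using sum_uv by simp_all
  then show "\<delta>1 = \<delta>2" using off_uv by (metis ext)
qed

text \<open>Every merged vector is realised by an orientation in which u does not
  reach v: in its fibre take one with the largest in-degree at u; if u reached v,
  reversing a u-v path would stay in the fibre and increase that in-degree.\<close>
lemma merge_image_not_reaching:
  "merge_degrees ` in_degree H ` {eps\<in>nonsep_orientations. \<not> reaches eps u v} =
   merge_degrees ` in_degree H ` nonsep_orientations"
proof
  show "merge_degrees ` in_degree H ` nonsep_orientations \<subseteq>
      merge_degrees ` in_degree H ` {eps\<in>nonsep_orientations. \<not> reaches eps u v}"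
    unfolding image_image
  proof (intro image_subsetI)
    fix eps assume eps: "eps \<in> nonsep_orientations"
    define fibre where "fibre = {eps'\<in>nonsep_orientations.
      merge_degrees (in_degree H eps') = merge_degrees (in_degree H eps)}"
    have "finite fibre" "eps \<in> fibre"
      using finite_nonsep_orientations eps by (auto simp: fibre_def)
    define m where "m = Max ((\<lambda>eps'. in_degree H eps' u) ` fibre)"
    have "m \<in> (\<lambda>eps'. in_degree H eps' u) ` fibre"
      unfolding m_def using \<open>finite fibre\<close> \<open>eps \<in> fibre\<close> by (intro Max_in) auto
    then obtain eps_max where max: "eps_max \<in> fibre" "in_degree H eps_max u = m" by blast
    have bound: "in_degree H eps' u \<le> m" if "eps' \<in> fibre" for eps'
      unfolding m_def using \<open>finite fibre\<close> that by (intro Max_ge) auto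
    have "\<not> reaches eps_max u v"
    proof
      assume "reaches eps_max u v"
      then obtain eps' where eps': "eps' \<in> nonsep_orientations" and
        shifted: "\<And>z. in_degree H eps' z + (if z = v then 1 else 0) =
          in_degree H eps_max z + (if z = u then 1 else 0)"
        using reverse_u_v_path max(1) by (auto simp: fibre_def)
      have "merge_degrees (in_degree H eps') = merge_degrees (in_degree H eps_max)"
      proof
        fix z show "merge_degrees (in_degree H eps') z = merge_degrees (in_degree H eps_max) z"
          using shifted[of z] shifted[of u] shifted[of v] ends_uv(3) by (auto simp: merge_degrees_def)
      qed
      then have "eps' \<in> fibre" using eps' max(1) by (simp add: fibre_def)
      then have "in_degree H eps' u \<le> m" by (rule bound)
      then show False using shifted[of u] max(2) ends_uv(3) by simp
    qed
    then show "merge_degrees (in_degree H eps) \<in>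
        (\<lambda>eps. merge_degrees (in_degree H eps)) ` {eps\<in>nonsep_orientations. \<not> reaches eps u v}"
      using max(1) by (intro image_eqI[where x = eps_max]) (auto simp: fibre_def)
  qed
qed (intro image_mono, blast)

lemma alpha_K: "alpha K = card (in_degree H ` {eps\<in>nonsep_orientations. \<not> reaches eps u v})"
proof -
  have "in_degree K ` BO K = merge_degrees ` in_degree H ` nonsep_orientations"
    unfolding BO_K_eq in_degree_K image_image ..
  then have "alpha K = card (merge_degrees ` in_degree H ` {eps\<in>nonsep_orientations. \<not> reaches eps u v})"
    using alpha_eq_card_in_degrees[of K] finite_edges(2) merge_image_not_reaching
    by (simp add: K_edges)
  then show ?thesis using card_image[OF merge_inj_not_reaching] by simp
qed

theorem alpha_deletion_contraction: "alpha G = alpha H + alpha K"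
proof -
  have "alpha H = card (in_degree H ` {eps\<in>nonsep_orientations. reaches eps u v \<and> reaches eps v u})"
    using alpha_eq_card_in_degrees[OF finite_edges(2)] by (simp add: BO_H_eq)
  then show ?thesis using alpha_G card_split_reaches_u_v alpha_K by simp
qed

end


theorem mainTheorem2:
  fixes G :: "('v, 'e) mgraph"
  assumes "wf_graph G" and "connected_graph G"
  shows "((\<exists>v. verts G = {v}) \<and> edges G = {} \<longrightarrow> alpha G = 1)
    \<and> (\<forall>e\<in>edges G. is_loop G e \<longrightarrow> alpha G = alpha (delete_edge G e))
    \<and> (\<forall>e\<in>edges G. is_bridge G e \<longrightarrow> alpha G = 0)
    \<and> (\<forall>e\<in>edges G. \<not> is_bridge G e \<and> \<not> is_loop G e \<longrightarrow>
          alpha G = alpha (delete_edge G e) + alpha (contract_edge G e))"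
proof (intro conjI ballI impI)
  assume single: "(\<exists>v. verts G = {v}) \<and> edges G = {}"
  then obtain w where "verts G = {w}" by blast
  then show "alpha G = 1" using single alpha_single_vertex[of G w] by simp
next
  fix e assume "e \<in> edges G" "is_loop G e"
  then show "alpha G = alpha (delete_edge G e)" by (rule alpha_delete_loop[OF assms(1)])
next
  fix e assume "e \<in> edges G" "is_bridge G e"
  from \<open>is_bridge G e\<close> show "alpha G = 0" by (rule alpha_bridge[OF assms(1)])
next
  fix e assume "e \<in> edges G" "\<not> is_bridge G e \<and> \<not> is_loop G e"
  then interpret deletion_contraction G e
    using assms by (simp add: deletion_contraction_def)
  show "alpha G = alpha (delete_edge G e) + alpha (contract_edge G e)"
    by (rule alpha_deletion_contraction)
qed

end
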